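(* For every $n\ge 1$, the number of tree-like tableaux of size $n$ having no occupied corner equals $$a(n)=\sum_{k=\lceil (n-1)/2\rceil}^{n}\binom{k+1}{n-k}(-1)^{n-k}\,k!.$$
   Context: A tree-like tableau of size $n$ is a Ferrers diagram (left-justified rows of cells, with weakly decreasing row lengths from top to bottom, in English convention) in which each cell is either empty or pointed, with exactly $n$ pointed cells, such that: (1) the top-left cell is pointed (the root); (2) every pointed cell other than the root has either a pointed cell to its left in the same row or a pointed cell above it in the same column, but not both; (3) every row and every column contains a pointed cell. A corner is a cell with no cell below it and no cell to its right; an occupied corner is a pointed corner. *)

theory Defs
  imports Complex_Main
begin

text \<open>Cells are pairs (i,j): row i (counted from the top, starting at 0) and
column j (counted from the left, starting at 0), English convention.\<close>

definition ferrers :: "(nat \<times> nat) set \<Rightarrow> bool" where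
  "ferrers D \<longleftrightarrow> finite D \<and> D \<noteq> {} \<and>
     (\<forall>i j i' j'. (i, j) \<in> D \<longrightarrow> i' \<le> i \<longrightarrow> j' \<le> j \<longrightarrow> (i', j') \<in> D)"

definition tree_like_tableau :: "(nat \<times> nat) set \<Rightarrow> (nat \<times> nat) set \<Rightarrow> bool" where
  "tree_like_tableau D P \<longleftrightarrow> ferrers D \<and> P \<subseteq> D \<and>
     (0, 0) \<in> P \<and>
     (\<forall>i j. (i, j) \<in> P \<longrightarrow> (i, j) \<noteq> (0, 0) \<longrightarrow>
        ((\<exists>j'<j. (i, j') \<in> P) \<noteq> (\<exists>i'<i. (i', j) \<in> P))) \<and>
     (\<forall>i j. (i, j) \<in> D \<longrightarrow> (\<exists>j'. (i, j') \<in> P) \<and> (\<exists>i'. (i', j) \<in> P))"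

definition is_corner :: "(nat \<times> nat) set \<Rightarrow> nat \<times> nat \<Rightarrow> bool" where
  "is_corner D c \<longleftrightarrow> c \<in> D \<and> (fst c + 1, snd c) \<notin> D \<and> (fst c, snd c + 1) \<notin> D"

definition has_occupied_corner :: "(nat \<times> nat) set \<Rightarrow> (nat \<times> nat) set \<Rightarrow> bool" where
  "has_occupied_corner D P \<longleftrightarrow> (\<exists>c \<in> P. is_corner D c)"

definition tlt_no_occ_corner :: "nat \<Rightarrow> ((nat \<times> nat) set \<times> (nat \<times> nat) set) set" where
  "tlt_no_occ_corner n = {(D, P). tree_like_tableau D P \<and> card P = n \<and> \<not> has_occupied_corner D P}"

end

theory Submission
  imports Defs
begin

text \<open>Call a set S of occupied corners of a tableau a marking, and let N(n,k) count tableaux of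
  size n with a marking of size k; by inclusion-exclusion the number of tableaux without occupied
  corner is the alternating sum of the N(n,k). A marked corner is attached to a pointed cell
  either on its left or above it, and transposition exchanges the two cases. Deleting the column
  of a left-attached marked corner leaves a tableau of size n-1 with k-1 marks and a distinguished
  row containing no mark, and this is reversible. Since a tableau of size m has m+1 rows plus
  columns and a marking blocks two of them per mark, double counting gives
  k N(n,k) = (n + 2 - 2k) N(n-1,k-1). Together with N(n,0) = n! this yields
  N(n,k) = (n-k)! binom(n-k+1,k), and reversing the summation gives the formula.

  The count n! of all tableaux comes from refining it by the number of pointed cells in the top
  row: removing the last top cell if it is alone in its column, and otherwise merging the two top
  rows, shows that this generating polynomial is the rising factorial x (x+1) ... (x+n-1).\<close>

section \<open>Tree-like tableaux\<close>

type_synonym cells = "(nat \<times> nat) set"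

definition tableaux :: "nat \<Rightarrow> (cells \<times> cells) set" where
  "tableaux n = {(D, P). tree_like_tableau D P \<and> card P = n}"

lemma ferrersI:
  assumes "finite D" "(0,0) \<in> D" "\<And>i j i' j'. (i,j) \<in> D \<Longrightarrow> i' \<le> i \<Longrightarrow> j' \<le> j \<Longrightarrow> (i',j') \<in> D"
  shows "ferrers D"
  unfolding ferrers_def using assms by blast

lemma ferrers_downward: "ferrers D \<Longrightarrow> (i, j) \<in> D \<Longrightarrow> i' \<le> i \<Longrightarrow> j' \<le> j \<Longrightarrow> (i', j') \<in> D"
  unfolding ferrers_def by blast

lemma ferrers_origin: "ferrers D \<Longrightarrow> (0, 0) \<in> D"
proof -
  assume F: "ferrers D"
  then obtain c where "c \<in> D" unfolding ferrers_def by blast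
  then obtain i j where "(i, j) \<in> D" by (cases c) auto
  then show ?thesis using ferrers_downward[OF F] by blast
qed

lemma tree_like_tableauI:
  assumes "ferrers D" "P \<subseteq> D" "(0,0) \<in> P"
    "\<And>i j. (i,j) \<in> P \<Longrightarrow> (i,j) \<noteq> (0,0) \<Longrightarrow> (\<exists>j'<j. (i,j') \<in> P) \<noteq> (\<exists>i'<i. (i',j) \<in> P)"
    "\<And>i j. (i,j) \<in> D \<Longrightarrow> \<exists>j'. (i,j') \<in> P"
    "\<And>i j. (i,j) \<in> D \<Longrightarrow> \<exists>i'. (i',j) \<in> P"
  shows "tree_like_tableau D P"
  unfolding tree_like_tableau_def using assms by blast

lemma tlt_ferrers: "tree_like_tableau D P \<Longrightarrow> ferrers D"
  and tlt_pointed_subset: "tree_like_tableau D P \<Longrightarrow> P \<subseteq> D"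
  and tlt_root: "tree_like_tableau D P \<Longrightarrow> (0,0) \<in> P"
  and tlt_left_xor_above: "tree_like_tableau D P \<Longrightarrow> (i, j) \<in> P \<Longrightarrow> (i, j) \<noteq> (0, 0) \<Longrightarrow>
        ((\<exists>j'<j. (i, j') \<in> P) \<noteq> (\<exists>i'<i. (i', j) \<in> P))"
  and tlt_row_pointed: "tree_like_tableau D P \<Longrightarrow> (i, j) \<in> D \<Longrightarrow> \<exists>j'. (i, j') \<in> P"
  and tlt_col_pointed: "tree_like_tableau D P \<Longrightarrow> (i, j) \<in> D \<Longrightarrow> \<exists>i'. (i', j) \<in> P"
  unfolding tree_like_tableau_def by blast+

lemma tlt_finite_diagram: "tree_like_tableau D P \<Longrightarrow> finite D"
  using tlt_ferrers unfolding ferrers_def by simp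

lemma tlt_finite_pointed: "tree_like_tableau D P \<Longrightarrow> finite P"
  using tlt_finite_diagram tlt_pointed_subset by (rule finite_subset[rotated])

lemma tlt_row_less_card:
  assumes T: "tree_like_tableau D P" and c: "(i, j) \<in> D"
  shows "i < card P"
proof -
  have "{0..i} \<subseteq> fst ` P"
  proof
    fix i' assume "i' \<in> {0..i}"
    then have "(i', 0) \<in> D" using ferrers_downward[OF tlt_ferrers[OF T] c, of i' 0] by simp
    then obtain j' where "(i', j') \<in> P" using tlt_row_pointed[OF T] by blast
    then show "i' \<in> fst ` P" by (rule rev_image_eqI) simp
  qed
  then have "card {0..i} \<le> card (fst ` P)"
    by (rule card_mono[OF finite_imageI[OF tlt_finite_pointed[OF T]]])
  also have "\<dots> \<le> card P" using card_image_le[OF tlt_finite_pointed[OF T]] .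
  finally show ?thesis by simp
qed

lemma tlt_col_less_card:
  assumes T: "tree_like_tableau D P" and c: "(i, j) \<in> D"
  shows "j < card P"
proof -
  have "{0..j} \<subseteq> snd ` P"
  proof
    fix j' assume "j' \<in> {0..j}"
    then have "(0, j') \<in> D" using ferrers_downward[OF tlt_ferrers[OF T] c, of 0 j'] by simp
    then obtain i' where "(i', j') \<in> P" using tlt_col_pointed[OF T] by blast
    then show "j' \<in> snd ` P" by (rule rev_image_eqI) simp
  qed
  then have "card {0..j} \<le> card (snd ` P)"
    by (rule card_mono[OF finite_imageI[OF tlt_finite_pointed[OF T]]])
  also have "\<dots> \<le> card P" using card_image_le[OF tlt_finite_pointed[OF T]] .
  finally show ?thesis by simp
qed

lemma tlt_diagram_subset_square: "tree_like_tableau D P \<Longrightarrow> D \<subseteq> {..<card P} \<times> {..<card P}"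
  using tlt_row_less_card tlt_col_less_card by fastforce

lemma finite_tableaux: "finite (tableaux n)"
proof -
  have "tableaux n \<subseteq> Pow ({..<n} \<times> {..<n}) \<times> Pow ({..<n} \<times> {..<n})"
    unfolding tableaux_def using tlt_diagram_subset_square tlt_pointed_subset by fastforce
  then show ?thesis by (rule finite_subset) auto
qed

lemma tableaux_1: "tableaux 1 = {({(0,0)},{(0,0)})}"
proof (intro equalityI subsetI)
  fix T assume "T \<in> tableaux 1"
  then obtain D P where TT: "T = (D,P)" and T: "tree_like_tableau D P" and c: "card P = 1"
    unfolding tableaux_def by auto
  have P: "P = {(0,0)}" using c tlt_root[OF T] by (metis card_1_singletonE singletonD)
  have "D \<subseteq> {..<1} \<times> {..<1}" using tlt_diagram_subset_square[OF T] c by simp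
  then have "D = {(0,0)}" using ferrers_origin[OF tlt_ferrers[OF T]] by auto
  then show "T \<in> {({(0,0)},{(0,0)})}" using TT P by simp
next
  fix T assume "T \<in> {({(0::nat,0::nat)},{(0::nat,0::nat)})}"
  moreover have "tree_like_tableau {(0,0)} {(0,0)}"
    unfolding tree_like_tableau_def ferrers_def by auto
  ultimately show "T \<in> tableaux 1" unfolding tableaux_def by auto
qed

lemma tlt_root_only_corner:
  assumes T: "tree_like_tableau D P" and c: "is_corner D (0,0)"
  shows "card P = 1"
proof -
  have F: "ferrers D" using tlt_ferrers[OF T] .
  have "(1,0) \<notin> D" "(0,1) \<notin> D" using c unfolding is_corner_def by auto
  then have "D \<subseteq> {(0,0)}"
    using ferrers_downward[OF F, of _ _ 1 0] ferrers_downward[OF F, of _ _ 0 1]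
    by (fastforce simp: Suc_le_eq)
  then have "P = {(0,0)}" using tlt_pointed_subset[OF T] tlt_root[OF T] by blast
  then show ?thesis by simp
qed

definition row_length :: "cells \<Rightarrow> nat \<Rightarrow> nat" where
  "row_length D i = card {j. (i, j) \<in> D}"

lemma down_closed_eq_lessThan_card:
  fixes A :: "nat set"
  assumes "finite A" "\<And>x y. x \<in> A \<Longrightarrow> y \<le> x \<Longrightarrow> y \<in> A"
  shows "A = {..<card A}"
proof (cases "A = {}")
  case False
  have "A = {..Max A}"
    using assms Max_in[OF assms(1) False] by (auto intro: Max_ge)
  then show ?thesis by (metis card_lessThan lessThan_Suc_atMost)
qed simp

lemma ferrers_mem_iff_less_row_length:
  assumes F: "ferrers D"
  shows "(i, j) \<in> D \<longleftrightarrow> j < row_length D i"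
proof -
  have "{j. (i, j) \<in> D} \<subseteq> snd ` D" by force
  then have fin: "finite {j. (i, j) \<in> D}"
    using F unfolding ferrers_def by (meson finite_imageI finite_subset)
  have "{j. (i, j) \<in> D} = {..<card {j. (i, j) \<in> D}}"
    by (rule down_closed_eq_lessThan_card[OF fin]) (use ferrers_downward[OF F] in auto)
  then show ?thesis unfolding row_length_def by (metis lessThan_iff mem_Collect_eq)
qed

section \<open>Rows and columns\<close>

definition rows_of :: "cells \<Rightarrow> nat set" where "rows_of D = {i. (i, 0) \<in> D}"
definition cols_of :: "cells \<Rightarrow> nat set" where "cols_of D = {j. (0, j) \<in> D}"

lemma finite_rows_of: "tree_like_tableau D P \<Longrightarrow> finite (rows_of D)"
  unfolding rows_of_def by (rule finite_subset[of _ "fst ` D"]) (force, simp add: tlt_finite_diagram)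

lemma finite_cols_of: "tree_like_tableau D P \<Longrightarrow> finite (cols_of D)"
  unfolding cols_of_def by (rule finite_subset[of _ "snd ` D"]) (force, simp add: tlt_finite_diagram)

text \<open>Each non-root pointed cell heads exactly one line: it is the leftmost pointed cell of a
  row other than the top one, or the topmost pointed cell of a column other than the first.\<close>

definition row_heads :: "cells \<Rightarrow> cells" where
  "row_heads P = {p \<in> P. 0 < fst p \<and> \<not> (\<exists>j'<snd p. (fst p, j') \<in> P)}"

definition col_heads :: "cells \<Rightarrow> cells" where
  "col_heads P = {p \<in> P. 0 < snd p \<and> \<not> (\<exists>i'<fst p. (i', snd p) \<in> P)}"

lemma tlt_pointed_eq_heads:
  assumes T: "tree_like_tableau D P"
  shows "P = insert (0,0) (row_heads P \<union> col_heads P)"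
    and "row_heads P \<inter> col_heads P = {}"
proof -
  show "P = insert (0,0) (row_heads P \<union> col_heads P)"
  proof (intro equalityI subsetI)
    fix p assume p: "p \<in> P"
    obtain i j where pij: "p = (i, j)" by (cases p)
    show "p \<in> insert (0,0) (row_heads P \<union> col_heads P)"
    proof (cases "p = (0,0)")
      case False
      then have "(\<exists>j'<j. (i, j') \<in> P) \<noteq> (\<exists>i'<i. (i', j) \<in> P)"
        using tlt_left_xor_above[OF T] p pij by blast
      then show ?thesis using p pij unfolding row_heads_def col_heads_def
        by (cases "\<exists>j'<j. (i, j') \<in> P") (auto intro: gr_zeroI)
    qed simp
  qed (use tlt_root[OF T] in \<open>auto simp: row_heads_def col_heads_def\<close>)
  show "row_heads P \<inter> col_heads P = {}"
    using tlt_left_xor_above[OF T] unfolding row_heads_def col_heads_def by fastforce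
qed

lemma bij_betw_fst_row_heads:
  assumes T: "tree_like_tableau D P"
  shows "bij_betw fst (row_heads P) (rows_of D - {0})"
  unfolding bij_betw_def
proof
  show "inj_on fst (row_heads P)"
    by (rule inj_onI) (auto simp: row_heads_def, metis linorder_neqE_nat prod.collapse)
  show "fst ` row_heads P = rows_of D - {0}"
  proof (intro equalityI subsetI)
    fix i assume "i \<in> fst ` row_heads P"
    then obtain j where "(i,j) \<in> row_heads P" by auto
    then have "(i,j) \<in> D" "i > 0" using tlt_pointed_subset[OF T] unfolding row_heads_def by auto
    then show "i \<in> rows_of D - {0}" unfolding rows_of_def
      using ferrers_downward[OF tlt_ferrers[OF T], of i j i 0] by auto
  next
    fix i assume i: "i \<in> rows_of D - {0}"
    then obtain j0 where "(i, j0) \<in> P" using tlt_row_pointed[OF T] unfolding rows_of_def by blast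
    define j where "j = (LEAST j. (i, j) \<in> P)"
    have "(i, j) \<in> P" unfolding j_def by (rule LeastI) fact
    moreover have "\<not> (\<exists>j'<j. (i, j') \<in> P)" unfolding j_def using not_less_Least by blast
    ultimately have "(i,j) \<in> row_heads P" using i unfolding row_heads_def by auto
    then show "i \<in> fst ` row_heads P" by (rule rev_image_eqI) simp
  qed
qed

lemma bij_betw_snd_col_heads:
  assumes T: "tree_like_tableau D P"
  shows "bij_betw snd (col_heads P) (cols_of D - {0})"
  unfolding bij_betw_def
proof
  show "inj_on snd (col_heads P)"
    by (rule inj_onI) (auto simp: col_heads_def, metis linorder_neqE_nat prod.collapse)
  show "snd ` col_heads P = cols_of D - {0}"
  proof (intro equalityI subsetI)
    fix j assume "j \<in> snd ` col_heads P"
    then obtain i where "(i,j) \<in> col_heads P" by auto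
    then have "(i,j) \<in> D" "j > 0" using tlt_pointed_subset[OF T] unfolding col_heads_def by auto
    then show "j \<in> cols_of D - {0}" unfolding cols_of_def
      using ferrers_downward[OF tlt_ferrers[OF T], of i j 0 j] by auto
  next
    fix j assume j: "j \<in> cols_of D - {0}"
    then obtain i0 where "(i0, j) \<in> P" using tlt_col_pointed[OF T] unfolding cols_of_def by blast
    define i where "i = (LEAST i. (i, j) \<in> P)"
    have "(i, j) \<in> P" unfolding i_def by (rule LeastI) fact
    moreover have "\<not> (\<exists>i'<i. (i', j) \<in> P)" unfolding i_def using not_less_Least by blast
    ultimately have "(i,j) \<in> col_heads P" using j unfolding col_heads_def by auto
    then show "j \<in> snd ` col_heads P" by (rule rev_image_eqI) simp
  qed
qed

lemma card_rows_of_add_card_cols_of: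
  assumes T: "tree_like_tableau D P"
  shows "card (rows_of D) + card (cols_of D) = card P + 1"
proof -
  have fin: "finite (row_heads P)" "finite (col_heads P)"
    using tlt_finite_pointed[OF T] unfolding row_heads_def col_heads_def by auto
  have "(0,0) \<notin> row_heads P \<union> col_heads P" unfolding row_heads_def col_heads_def by auto
  then have "card P = card (row_heads P) + card (col_heads P) + 1"
    using tlt_pointed_eq_heads[OF T] fin by (metis card_Un_disjoint card_insert_disjoint finite_UnI Suc_eq_plus1)
  moreover have "0 \<in> rows_of D" "0 \<in> cols_of D"
    unfolding rows_of_def cols_of_def using ferrers_origin[OF tlt_ferrers[OF T]] by auto
  then have "card (rows_of D) = card (row_heads P) + 1" "card (cols_of D) = card (col_heads P) + 1"
    using bij_betw_same_card[OF bij_betw_fst_row_heads[OF T]]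
      bij_betw_same_card[OF bij_betw_snd_col_heads[OF T]] finite_rows_of[OF T] finite_cols_of[OF T]
    by (simp_all add: card_Diff_singleton card_gt_0_iff) (metis Suc_pred card_gt_0_iff empty_iff)+
  ultimately show ?thesis by simp
qed

section \<open>Occupied corners and column deletion\<close>

definition occupied_corners :: "cells \<Rightarrow> cells \<Rightarrow> cells" where
  "occupied_corners D P = {c \<in> P. is_corner D c}"

lemma corner_unique_in_row:
  assumes F: "ferrers D" and "is_corner D (i, j)" and "is_corner D (i, j')"
  shows "j = j'"
  using assms ferrers_downward[OF F, of i j' i "j + 1"] ferrers_downward[OF F, of i j i "j' + 1"]
  unfolding is_corner_def by (cases j j' rule: linorder_cases) auto

lemma corner_unique_in_col:
  assumes F: "ferrers D" and "is_corner D (i, j)" and "is_corner D (i', j)"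
  shows "i = i'"
  using assms ferrers_downward[OF F, of i' j "i + 1" j] ferrers_downward[OF F, of i j "i' + 1" j]
  unfolding is_corner_def by (cases i i' rule: linorder_cases) auto

lemma finite_occupied_corners: "tree_like_tableau D P \<Longrightarrow> finite (occupied_corners D P)"
  unfolding occupied_corners_def using tlt_finite_pointed by simp

definition skip :: "nat \<Rightarrow> nat \<Rightarrow> nat" where "skip j0 j = (if j < j0 then j else Suc j)"
definition unskip :: "nat \<Rightarrow> nat \<Rightarrow> nat" where "unskip j0 j = (if j < j0 then j else j - 1)"

lemma skip_neq: "skip j0 j \<noteq> j0" unfolding skip_def by auto
lemma skip_unskip: "j \<noteq> j0 \<Longrightarrow> skip j0 (unskip j0 j) = j" unfolding skip_def unskip_def by auto
lemma unskip_skip: "unskip j0 (skip j0 j) = j" unfolding skip_def unskip_def by auto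
lemma skip_less_iff: "skip j0 a < skip j0 b \<longleftrightarrow> a < b" unfolding skip_def by auto
lemma skip_le_iff: "skip j0 a \<le> skip j0 b \<longleftrightarrow> a \<le> b" unfolding skip_def by auto
lemma skip_eq_iff: "skip j0 a = skip j0 b \<longleftrightarrow> a = b" unfolding skip_def by auto
lemma skip_0: "j0 \<ge> 1 \<Longrightarrow> skip j0 0 = 0" unfolding skip_def by auto
lemma skip_eq_0_iff: "skip j0 j = 0 \<longleftrightarrow> j = 0 \<and> 0 < j0" unfolding skip_def by auto
lemma Suc_skip_le: "Suc (skip j0 j) \<le> skip j0 (Suc j)" unfolding skip_def by auto
lemma unskip_less_of_less_skip: "j'' < skip j0 j \<Longrightarrow> j'' \<noteq> j0 \<Longrightarrow> unskip j0 j'' < j"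
  unfolding skip_def unskip_def by (auto split: if_splits)
lemma unskip_mono: "a \<le> b \<Longrightarrow> unskip j0 a \<le> unskip j0 b" unfolding unskip_def by auto
lemma unskip_less: "a < b \<Longrightarrow> a \<noteq> j0 \<Longrightarrow> b \<noteq> j0 \<Longrightarrow> unskip j0 a < unskip j0 b"
  unfolding unskip_def by auto
lemma skip_less_of_less_unskip: "j'' < unskip j0 j \<Longrightarrow> j \<noteq> j0 \<Longrightarrow> skip j0 j'' < j"
  unfolding skip_def unskip_def by (auto split: if_splits)

definition delete_col :: "nat \<Rightarrow> cells \<Rightarrow> cells" where
  "delete_col j0 X = {(i,j). (i, skip j0 j) \<in> X}"

definition insert_col :: "nat \<Rightarrow> cells \<Rightarrow> cells" where
  "insert_col j0 X = (\<lambda>(i,j). (i, skip j0 j)) ` X"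

lemma bij_betw_delete_col: "bij_betw (\<lambda>(i,j). (i, skip j0 j)) (delete_col j0 X) {p\<in>X. snd p \<noteq> j0}"
  unfolding bij_betw_def
proof
  show "inj_on (\<lambda>(i, j). (i, skip j0 j)) (delete_col j0 X)"
    by (rule inj_onI) (auto simp: skip_eq_iff)
  show "(\<lambda>(i, j). (i, skip j0 j)) ` delete_col j0 X = {p \<in> X. snd p \<noteq> j0}"
  proof (intro equalityI subsetI)
    fix p assume "p \<in> (\<lambda>(i, j). (i, skip j0 j)) ` delete_col j0 X"
    then show "p \<in> {p \<in> X. snd p \<noteq> j0}" unfolding delete_col_def using skip_neq by auto
  next
    fix p assume p: "p \<in> {p \<in> X. snd p \<noteq> j0}"
    obtain i j where pij: "p = (i,j)" by (cases p)
    have "(i, unskip j0 j) \<in> delete_col j0 X" unfolding delete_col_def using p pij skip_unskip by auto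
    moreover have "p = (\<lambda>(i, j). (i, skip j0 j)) (i, unskip j0 j)" using p pij skip_unskip by auto
    ultimately show "p \<in> (\<lambda>(i, j). (i, skip j0 j)) ` delete_col j0 X" by blast
  qed
qed

lemma card_delete_col: "card (delete_col j0 X) = card {p\<in>X. snd p \<noteq> j0}"
  using bij_betw_same_card[OF bij_betw_delete_col] .

lemma mem_insert_col: "(i,j) \<in> insert_col j0 X \<longleftrightarrow> j \<noteq> j0 \<and> (i, unskip j0 j) \<in> X"
proof
  assume "(i,j) \<in> insert_col j0 X"
  then obtain a b where "(a,b) \<in> X" "(i,j) = (a, skip j0 b)" unfolding insert_col_def by auto
  then show "j \<noteq> j0 \<and> (i, unskip j0 j) \<in> X" using skip_neq unskip_skip by auto
next
  assume a: "j \<noteq> j0 \<and> (i, unskip j0 j) \<in> X"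
  then have "(i,j) = (\<lambda>(i,j). (i, skip j0 j)) (i, unskip j0 j)" using skip_unskip by auto
  then show "(i,j) \<in> insert_col j0 X" unfolding insert_col_def using a by blast
qed

lemma insert_delete_col: "insert_col j0 (delete_col j0 X) = {p\<in>X. snd p \<noteq> j0}"
  using bij_betw_delete_col[of j0 X] unfolding bij_betw_def insert_col_def by simp

lemma card_insert_col: "card (insert_col j0 X) = card X"
  unfolding insert_col_def by (rule card_image) (auto simp: inj_on_def skip_eq_iff)

lemma ferrers_delete_col:
  assumes F: "ferrers D" and j0: "1 \<le> j0"
  shows "ferrers (delete_col j0 D)"
proof (rule ferrersI)
  have "finite {p\<in>D. snd p \<noteq> j0}" using F unfolding ferrers_def by simp
  then show "finite (delete_col j0 D)" using bij_betw_finite[OF bij_betw_delete_col] by blast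
  show "(0,0) \<in> delete_col j0 D" unfolding delete_col_def using ferrers_origin[OF F] skip_0[OF j0] by simp
  fix i j i' j' assume "(i,j) \<in> delete_col j0 D" "i' \<le> i" "j' \<le> j"
  then show "(i',j') \<in> delete_col j0 D" unfolding delete_col_def
    using ferrers_downward[OF F, of i "skip j0 j" i' "skip j0 j'"] skip_le_iff[of j0 j' j] by simp
qed

lemma delete_col_occupied_corners:
  assumes F: "ferrers D"
  shows "delete_col j0 (occupied_corners D P) \<subseteq> occupied_corners (delete_col j0 D) (delete_col j0 P)"
proof
  fix p assume "p \<in> delete_col j0 (occupied_corners D P)"
  then obtain i j where p: "p = (i,j)" and pP: "(i, skip j0 j) \<in> P"
    and pc: "is_corner D (i, skip j0 j)" unfolding delete_col_def occupied_corners_def by auto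
  have "(i, skip j0 (j+1)) \<notin> D"
    using ferrers_downward[OF F, of i "skip j0 (j+1)" i "skip j0 j + 1"] Suc_skip_le[of j0 j] pc
    unfolding is_corner_def by auto
  then show "p \<in> occupied_corners (delete_col j0 D) (delete_col j0 P)"
    using pc pP unfolding p occupied_corners_def is_corner_def delete_col_def by simp
qed


definition col_segment :: "nat \<Rightarrow> nat \<Rightarrow> cells" where
  "col_segment i0 j0 = {p. snd p = j0 \<and> fst p \<le> i0}"

definition add_col_diagram :: "nat \<Rightarrow> nat \<Rightarrow> cells \<Rightarrow> cells" where
  "add_col_diagram i0 j0 D = insert_col j0 D \<union> col_segment i0 j0"

definition add_col_pointed :: "nat \<Rightarrow> nat \<Rightarrow> cells \<Rightarrow> cells" where
  "add_col_pointed i0 j0 P = insert (i0,j0) (insert_col j0 P)"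

lemma mem_add_col_diagram:
  "(i,j) \<in> add_col_diagram i0 j0 D \<longleftrightarrow> (j \<noteq> j0 \<and> (i, unskip j0 j) \<in> D) \<or> (j = j0 \<and> i \<le> i0)"
  unfolding add_col_diagram_def col_segment_def by (auto simp: mem_insert_col)

lemma mem_add_col_pointed:
  "(i,j) \<in> add_col_pointed i0 j0 P \<longleftrightarrow> (i,j) = (i0,j0) \<or> (j \<noteq> j0 \<and> (i, unskip j0 j) \<in> P)"
  unfolding add_col_pointed_def by (auto simp: mem_insert_col)

lemma card_add_col_pointed: "finite P \<Longrightarrow> card (add_col_pointed i0 j0 P) = card P + 1"
  unfolding add_col_pointed_def insert_col_def
  using card_insert_col[of j0 P, unfolded insert_col_def] by (simp add: mem_insert_col[unfolded insert_col_def])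

lemma delete_col_add_col_diagram: "delete_col j0 (add_col_diagram i0 j0 D) = D"
  unfolding add_col_diagram_def delete_col_def col_segment_def by (auto simp: mem_insert_col unskip_skip skip_neq)

lemma delete_col_add_col_pointed: "delete_col j0 (add_col_pointed i0 j0 P) = P"
  unfolding add_col_pointed_def delete_col_def by (auto simp: mem_insert_col unskip_skip skip_neq)

lemma add_col_delete_col_diagram:
  "{p\<in>D. snd p = j0} = col_segment i0 j0 \<Longrightarrow> add_col_diagram i0 j0 (delete_col j0 D) = D"
  unfolding add_col_diagram_def insert_delete_col by blast

lemma add_col_delete_col_pointed:
  "{p\<in>X. snd p = j0} = {(i0,j0)} \<Longrightarrow> add_col_pointed i0 j0 (delete_col j0 X) = X"
  unfolding add_col_pointed_def insert_delete_col by blast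

text \<open>A pointed corner attached to its left is the only pointed cell of its column, so that
  column can be deleted.\<close>

context
  fixes D P :: "cells" and i0 j0 :: nat
  assumes T: "tree_like_tableau D P" and corner_pointed: "(i0, j0) \<in> P"
    and corner: "is_corner D (i0, j0)" and attached_left: "\<exists>j'<j0. (i0, j') \<in> P"
begin

lemma left_attached_corner_col: "(i, j0) \<in> D \<longleftrightarrow> i \<le> i0"
  using ferrers_downward[OF tlt_ferrers[OF T], of i j0 "i0+1" j0] corner
    ferrers_downward[OF tlt_ferrers[OF T], of i0 j0 i j0]
  unfolding is_corner_def by (cases "i \<le> i0") auto

lemma left_attached_corner_row: "(i0, j) \<in> D \<longleftrightarrow> j \<le> j0"
  using ferrers_downward[OF tlt_ferrers[OF T], of i0 j i0 "j0+1"] corner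
    ferrers_downward[OF tlt_ferrers[OF T], of i0 j0 i0 j]
  unfolding is_corner_def by (cases "j \<le> j0") auto

lemma left_attached_corner_col_pointed: "(i, j0) \<in> P \<longleftrightarrow> i = i0"
proof -
  have "\<not> (\<exists>i'<i0. (i', j0) \<in> P)"
    using tlt_left_xor_above[OF T corner_pointed] attached_left by auto
  moreover have "(i, j0) \<in> P \<Longrightarrow> i \<le> i0"
    using left_attached_corner_col tlt_pointed_subset[OF T] by blast
  ultimately show ?thesis using corner_pointed by (auto simp: le_less)
qed

lemma left_attached_corner_pos: "1 \<le> j0"
  using attached_left by auto

lemma delete_col_left_xor_above:
  assumes p: "(i,j) \<in> delete_col j0 P" "(i,j) \<noteq> (0,0)"
  shows "(\<exists>j'<j. (i,j') \<in> delete_col j0 P) \<noteq> (\<exists>i'<i. (i',j) \<in> delete_col j0 P)"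
proof -
  have pP: "(i, skip j0 j) \<in> P" using p(1) unfolding delete_col_def by simp
  have nr: "(i, skip j0 j) \<noteq> (0,0)" using p(2) skip_eq_0_iff[of j0 j] by auto
  have "(\<exists>j'<j. (i,j') \<in> delete_col j0 P) = (\<exists>j''<skip j0 j. (i,j'') \<in> P)"
  proof
    assume "\<exists>j'<j. (i,j') \<in> delete_col j0 P"
    then obtain j' where "j' < j" "(i, skip j0 j') \<in> P" unfolding delete_col_def by auto
    then show "\<exists>j''<skip j0 j. (i,j'') \<in> P" using skip_less_iff[of j0 j' j] by blast
  next
    assume "\<exists>j''<skip j0 j. (i,j'') \<in> P"
    then obtain j'' where j'': "j'' < skip j0 j" "(i,j'') \<in> P" by blast
    show "\<exists>j'<j. (i,j') \<in> delete_col j0 P"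
    proof (cases "j'' = j0")
      case True
      then have "i = i0" using left_attached_corner_col_pointed j'' by simp
      then have "skip j0 j \<le> j0" using left_attached_corner_row pP tlt_pointed_subset[OF T] by blast
      then show ?thesis using j''(1) True by simp
    next
      case False
      then have "(i, unskip j0 j'') \<in> delete_col j0 P"
        unfolding delete_col_def using skip_unskip j''(2) by simp
      then show ?thesis using unskip_less_of_less_skip[OF j''(1) False] by blast
    qed
  qed
  moreover have "(\<exists>i'<i. (i',j) \<in> delete_col j0 P) = (\<exists>i'<i. (i', skip j0 j) \<in> P)"
    unfolding delete_col_def by simp
  ultimately show ?thesis using tlt_left_xor_above[OF T pP nr] by simp
qed

lemma tlt_delete_col: "tree_like_tableau (delete_col j0 D) (delete_col j0 P)"
proof (rule tree_like_tableauI)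
  show "ferrers (delete_col j0 D)"
    using ferrers_delete_col[OF tlt_ferrers[OF T] left_attached_corner_pos] .
  show "delete_col j0 P \<subseteq> delete_col j0 D"
    unfolding delete_col_def using tlt_pointed_subset[OF T] by auto
  show "(0,0) \<in> delete_col j0 P"
    unfolding delete_col_def using tlt_root[OF T] skip_0[OF left_attached_corner_pos] by simp
next
  fix i j assume "(i,j) \<in> delete_col j0 D"
  then obtain j' where j': "(i, j') \<in> P" using tlt_row_pointed[OF T] unfolding delete_col_def by blast
  show "\<exists>j'. (i,j') \<in> delete_col j0 P"
  proof (cases "j' = j0")
    case True
    then have "i = i0" using left_attached_corner_col_pointed j' by simp
    then obtain j'' where "j'' < j0" "(i, j'') \<in> P" using attached_left by blast
    then have "(i, unskip j0 j'') \<in> delete_col j0 P" unfolding delete_col_def using skip_unskip by simp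
    then show ?thesis by blast
  next
    case False
    then have "(i, unskip j0 j') \<in> delete_col j0 P" unfolding delete_col_def using skip_unskip j' by simp
    then show ?thesis by blast
  qed
next
  fix i j assume "(i,j) \<in> delete_col j0 D"
  then obtain i' where "(i', skip j0 j) \<in> P" using tlt_col_pointed[OF T] unfolding delete_col_def by blast
  then show "\<exists>i'. (i',j) \<in> delete_col j0 P" unfolding delete_col_def by blast
qed (fact delete_col_left_xor_above)

lemma left_attached_corner_col_pointed_set: "{p\<in>P. snd p = j0} = {(i0,j0)}"
proof -
  have "p \<in> P \<and> snd p = j0 \<longleftrightarrow> p = (i0,j0)" for p
    using left_attached_corner_col_pointed by (cases p) auto
  then show ?thesis by blast
qed

lemma card_delete_col_pointed: "card (delete_col j0 P) = card P - 1"
proof -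
  have "{p\<in>P. snd p \<noteq> j0} = P - {(i0,j0)}" using left_attached_corner_col_pointed_set by blast
  then show ?thesis
    using card_delete_col[of j0 P] corner_pointed tlt_finite_pointed[OF T] by simp
qed

lemma left_attached_corner_col_segment: "{p\<in>D. snd p = j0} = col_segment i0 j0"
  unfolding col_segment_def using left_attached_corner_col by force

lemma row_length_delete_col: "row_length (delete_col j0 D) i0 = j0"
proof -
  have "(i0, skip j0 j) \<in> D \<longleftrightarrow> j < j0" for j
    unfolding left_attached_corner_row skip_def by simp
  then have "{j. (i0, j) \<in> delete_col j0 D} = {..<j0}" unfolding delete_col_def by auto
  then show ?thesis unfolding row_length_def by simp
qed

lemma rows_of_delete_col: "i0 \<in> rows_of (delete_col j0 D)"
  using skip_0[OF left_attached_corner_pos] left_attached_corner_row[of 0]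
  unfolding rows_of_def delete_col_def by simp

end

text \<open>Conversely, appending to row i0 a new last cell whose column contains only cells of rows
  0..i0 yields a tree-like tableau in which the new cell is a pointed corner attached to the left.\<close>

context
  fixes D1 P1 :: "cells" and i0 j0 :: nat
  assumes T1: "tree_like_tableau D1 P1" and row: "i0 \<in> rows_of D1" and j0: "j0 = row_length D1 i0"
begin

lemma add_col_row: "(i0,j) \<in> D1 \<longleftrightarrow> j < j0"
  using ferrers_mem_iff_less_row_length[OF tlt_ferrers[OF T1]] j0 by simp

lemma add_col_pos: "1 \<le> j0"
  using row add_col_row[of 0] unfolding rows_of_def by simp

lemma add_col_beyond: "(i,j) \<in> D1 \<Longrightarrow> j0 \<le> j \<Longrightarrow> i < i0"
  using ferrers_downward[OF tlt_ferrers[OF T1], of i j i0 j] add_col_row[of j] by force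

lemma unskip_add_col_0: "unskip j0 0 = 0"
  unfolding unskip_def using add_col_pos by simp

lemma ferrers_add_col: "ferrers (add_col_diagram i0 j0 D1)"
proof (rule ferrersI)
  have "col_segment i0 j0 \<subseteq> {..i0} \<times> {j0}" unfolding col_segment_def by auto
  then show "finite (add_col_diagram i0 j0 D1)"
    unfolding add_col_diagram_def insert_col_def
    using tlt_finite_diagram[OF T1] finite_subset by blast
  show "(0,0) \<in> add_col_diagram i0 j0 D1"
    unfolding mem_add_col_diagram using add_col_pos unskip_add_col_0 ferrers_origin[OF tlt_ferrers[OF T1]] by simp
next
  note F1 = tlt_ferrers[OF T1]
  fix i j i' j' assume a: "(i,j) \<in> add_col_diagram i0 j0 D1" "i' \<le> i" "j' \<le> j"
  show "(i',j') \<in> add_col_diagram i0 j0 D1"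
  proof (cases "j' = j0")
    case True
    have "i \<le> i0"
    proof (cases "j = j0")
      case False
      then have "(i, j - 1) \<in> D1" "j0 < j" using a(1) a(3) True unfolding mem_add_col_diagram unskip_def by auto
      then show ?thesis using add_col_beyond[of i "j - 1"] by linarith
    qed (use a(1) in \<open>simp add: mem_add_col_diagram\<close>)
    then show ?thesis unfolding mem_add_col_diagram using True a(2) by simp
  next
    case False
    have "(i', unskip j0 j') \<in> D1"
    proof (cases "j = j0")
      case True
      then have "i \<le> i0" using a(1) unfolding mem_add_col_diagram by simp
      moreover have "(i0, j0 - 1) \<in> D1" using add_col_row add_col_pos by simp
      moreover have "unskip j0 j' \<le> j0 - 1" using a(3) True False unfolding unskip_def by auto
      ultimately show ?thesis using ferrers_downward[OF F1, of i0 "j0 - 1" i' "unskip j0 j'"] a(2) by simp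
    next
      case False
      then have "(i, unskip j0 j) \<in> D1" using a(1) unfolding mem_add_col_diagram by simp
      then show ?thesis using ferrers_downward[OF F1, of i "unskip j0 j" i' "unskip j0 j'"] a unskip_mono[OF a(3)] by simp
    qed
    then show ?thesis unfolding mem_add_col_diagram using False by simp
  qed
qed

lemma add_col_attached_left: "\<exists>j'<j0. (i0, j') \<in> add_col_pointed i0 j0 P1"
proof -
  obtain j' where j': "(i0, j') \<in> P1" using tlt_row_pointed[OF T1] row unfolding rows_of_def by blast
  then have "j' < j0" using tlt_pointed_subset[OF T1] add_col_row by blast
  then show ?thesis using j' unfolding mem_add_col_pointed unskip_def by auto
qed

lemma add_col_left_xor_above:
  assumes p: "(i,j) \<in> add_col_pointed i0 j0 P1" "(i,j) \<noteq> (0,0)"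
  shows "(\<exists>j'<j. (i,j') \<in> add_col_pointed i0 j0 P1) \<noteq> (\<exists>i'<i. (i',j) \<in> add_col_pointed i0 j0 P1)"
proof (cases "(i,j) = (i0,j0)")
  case True
  then show ?thesis using add_col_attached_left unfolding mem_add_col_pointed by auto
next
  case False
  then have jn: "j \<noteq> j0" and q: "(i, unskip j0 j) \<in> P1" using p(1) unfolding mem_add_col_pointed by auto
  have qnr: "(i, unskip j0 j) \<noteq> (0,0)"
    using p(2) jn add_col_pos unfolding unskip_def by (auto split: if_splits)
  have "(\<exists>j'<j. (i,j') \<in> add_col_pointed i0 j0 P1) = (\<exists>j''<unskip j0 j. (i,j'') \<in> P1)"
  proof
    assume "\<exists>j'<j. (i,j') \<in> add_col_pointed i0 j0 P1"
    then obtain j' where j': "j' < j" "(i,j') \<in> add_col_pointed i0 j0 P1" by blast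
    show "\<exists>j''<unskip j0 j. (i,j'') \<in> P1"
    proof (cases "(i,j') = (i0,j0)")
      case True
      then have "(i0, j - 1) \<in> D1" "j0 < j"
        using j' q tlt_pointed_subset[OF T1] unfolding unskip_def by auto
      then show ?thesis using add_col_row[of "j - 1"] by simp
    next
      case False
      then have "j' \<noteq> j0" "(i, unskip j0 j') \<in> P1" using j'(2) unfolding mem_add_col_pointed by auto
      then show ?thesis using unskip_less[OF j'(1) _ jn] by blast
    qed
  next
    assume "\<exists>j''<unskip j0 j. (i,j'') \<in> P1"
    then obtain j'' where j'': "j'' < unskip j0 j" "(i,j'') \<in> P1" by blast
    then have "(i, skip j0 j'') \<in> add_col_pointed i0 j0 P1"
      unfolding mem_add_col_pointed using skip_neq unskip_skip by simp
    then show "\<exists>j'<j. (i,j') \<in> add_col_pointed i0 j0 P1"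
      using skip_less_of_less_unskip[OF j''(1) jn] by blast
  qed
  moreover have "(\<exists>i'<i. (i',j) \<in> add_col_pointed i0 j0 P1) = (\<exists>i'<i. (i', unskip j0 j) \<in> P1)"
    unfolding mem_add_col_pointed using jn by auto
  ultimately show ?thesis using tlt_left_xor_above[OF T1 q qnr] by simp
qed

lemma tlt_add_col: "tree_like_tableau (add_col_diagram i0 j0 D1) (add_col_pointed i0 j0 P1)"
proof (rule tree_like_tableauI[OF ferrers_add_col])
  show "add_col_pointed i0 j0 P1 \<subseteq> add_col_diagram i0 j0 D1"
    using tlt_pointed_subset[OF T1] by (auto simp: mem_add_col_diagram mem_add_col_pointed)
  show "(0,0) \<in> add_col_pointed i0 j0 P1"
    unfolding mem_add_col_pointed using tlt_root[OF T1] add_col_pos unskip_add_col_0 by simp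
next
  fix i j assume "(i,j) \<in> add_col_diagram i0 j0 D1"
  then have "(i,0) \<in> D1"
    using ferrers_downward[OF ferrers_add_col, of i j i 0] add_col_pos unskip_add_col_0
    by (simp add: mem_add_col_diagram)
  then obtain j' where "(i,j') \<in> P1" using tlt_row_pointed[OF T1] by blast
  then have "(i, skip j0 j') \<in> add_col_pointed i0 j0 P1"
    unfolding mem_add_col_pointed using skip_neq unskip_skip by simp
  then show "\<exists>j'. (i,j') \<in> add_col_pointed i0 j0 P1" by blast
next
  fix i j assume a: "(i,j) \<in> add_col_diagram i0 j0 D1"
  show "\<exists>i'. (i',j) \<in> add_col_pointed i0 j0 P1"
  proof (cases "j = j0")
    case False
    then have "(i, unskip j0 j) \<in> D1" using a unfolding mem_add_col_diagram by simp
    then obtain i' where "(i', unskip j0 j) \<in> P1" using tlt_col_pointed[OF T1] by blast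
    then show ?thesis using False unfolding mem_add_col_pointed by blast
  qed (auto simp: mem_add_col_pointed)
qed (fact add_col_left_xor_above)

lemma is_corner_add_col: "is_corner (add_col_diagram i0 j0 D1) (i0,j0)"
  unfolding is_corner_def mem_add_col_diagram using add_col_row unfolding unskip_def by simp

lemma insert_col_occupied_corners:
  assumes S1: "S1 \<subseteq> occupied_corners D1 P1" and free: "i0 \<notin> fst ` S1"
  shows "insert_col j0 S1 \<subseteq> occupied_corners (add_col_diagram i0 j0 D1) (add_col_pointed i0 j0 P1)"
proof
  fix p assume "p \<in> insert_col j0 S1"
  then obtain i j where pij: "p = (i,j)" and jn: "j \<noteq> j0" and q: "(i, unskip j0 j) \<in> S1"
    by (cases p) (auto simp: mem_insert_col)
  have qP: "(i, unskip j0 j) \<in> P1" and qD: "(i, unskip j0 j) \<in> D1"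
    and q1: "(i+1, unskip j0 j) \<notin> D1" and q2: "(i, unskip j0 j + 1) \<notin> D1"
    using q S1 unfolding occupied_corners_def is_corner_def by auto
  have "(i,j+1) \<notin> add_col_diagram i0 j0 D1"
  proof (cases "j + 1 = j0")
    case True
    then have tj: "unskip j0 j = j0 - 1" unfolding unskip_def by simp
    have "i \<noteq> i0" using free q by force
    moreover have "\<not> i < i0"
    proof
      assume "i < i0"
      have "(i0, j0 - 1) \<in> D1" using add_col_row add_col_pos by simp
      then have "(i+1, j0 - 1) \<in> D1"
        using ferrers_downward[OF tlt_ferrers[OF T1], of i0 "j0 - 1" "i+1" "j0 - 1"] \<open>i < i0\<close> by simp
      then show False using q1 tj by simp
    qed
    ultimately show ?thesis unfolding mem_add_col_diagram using True by simp
  next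
    case False
    then have "unskip j0 (j+1) = unskip j0 j + 1" using jn unfolding unskip_def by auto
    then show ?thesis unfolding mem_add_col_diagram using q2 False by simp
  qed
  moreover have "(i,j) \<in> add_col_pointed i0 j0 P1" "(i,j) \<in> add_col_diagram i0 j0 D1"
    "(i+1,j) \<notin> add_col_diagram i0 j0 D1"
    using jn qP qD q1 unfolding mem_add_col_pointed mem_add_col_diagram by auto
  ultimately show "p \<in> occupied_corners (add_col_diagram i0 j0 D1) (add_col_pointed i0 j0 P1)"
    unfolding pij occupied_corners_def is_corner_def by simp
qed

end

section \<open>The number of tree-like tableaux\<close>

definition top_pointed :: "cells \<Rightarrow> nat set" where "top_pointed P = {j. (0, j) \<in> P}"

lemma finite_top_pointed: "tree_like_tableau D P \<Longrightarrow> finite (top_pointed P)"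
  unfolding top_pointed_def by (rule finite_subset[of _ "snd ` P"]) (force, simp add: tlt_finite_pointed)

definition tableaux_top_row_longer :: "nat \<Rightarrow> (cells \<times> cells) set" where
  "tableaux_top_row_longer n = {(D, P). (D, P) \<in> tableaux n \<and> (1, row_length D 0 - 1) \<notin> D}"

definition tableaux_top_rows_equal :: "nat \<Rightarrow> (cells \<times> cells) set" where
  "tableaux_top_rows_equal n = {(D, P). (D, P) \<in> tableaux n \<and> (1, row_length D 0 - 1) \<in> D}"

lemma ferrers_row_length_top_pos: "ferrers D \<Longrightarrow> 1 \<le> row_length D 0"
  using ferrers_mem_iff_less_row_length[of D 0 0] ferrers_origin by fastforce

fun extend_top_row :: "cells \<times> cells \<Rightarrow> cells \<times> cells" where
  "extend_top_row (D, P) = (add_col_diagram 0 (row_length D 0) D, add_col_pointed 0 (row_length D 0) P)"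

fun shrink_top_row :: "cells \<times> cells \<Rightarrow> cells \<times> cells" where
  "shrink_top_row (D, P) = (delete_col (row_length D 0 - 1) D, delete_col (row_length D 0 - 1) P)"

lemma extend_top_row_facts:
  assumes T: "tree_like_tableau D P"
  defines "c \<equiv> row_length D 0"
  shows "row_length (add_col_diagram 0 c D) 0 = c + 1"
    and "(1, c) \<notin> add_col_diagram 0 c D"
    and "top_pointed (add_col_pointed 0 c P) = insert c (top_pointed P)" "c \<notin> top_pointed P"
proof -
  have top: "(0,j) \<in> D \<longleftrightarrow> j < c" for j using ferrers_mem_iff_less_row_length[OF tlt_ferrers[OF T]] c_def by simp
  have "(0, j) \<in> add_col_diagram 0 c D \<longleftrightarrow> j < c + 1" for j
    unfolding mem_add_col_diagram unskip_def top by auto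
  then have "{j. (0, j) \<in> add_col_diagram 0 c D} = {..<c + 1}" by auto
  then show "row_length (add_col_diagram 0 c D) 0 = c + 1" unfolding row_length_def by simp
  show "(1, c) \<notin> add_col_diagram 0 c D" unfolding mem_add_col_diagram by simp
  have "(0,j) \<in> P \<Longrightarrow> j < c" for j using tlt_pointed_subset[OF T] top by blast
  then show "top_pointed (add_col_pointed 0 c P) = insert c (top_pointed P)" "c \<notin> top_pointed P"
    unfolding top_pointed_def mem_add_col_pointed unskip_def by (force split: if_splits)+
qed

lemma top_row_longer_last_cell:
  assumes T: "tree_like_tableau D P" and A: "(1, row_length D 0 - 1) \<notin> D"
    and n: "2 \<le> card P"
  defines "c \<equiv> row_length D 0"
  shows "{p\<in>D. snd p = c - 1} = col_segment 0 (c - 1)"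
    and "(0, c - 1) \<in> P" "is_corner D (0, c - 1)" "2 \<le> c"
proof -
  have F: "ferrers D" using tlt_ferrers[OF T] .
  have top: "(0,j) \<in> D \<longleftrightarrow> j < c" for j using ferrers_mem_iff_less_row_length[OF F] c_def by simp
  have c1: "1 \<le> c" using ferrers_row_length_top_pos[OF F] c_def by simp
  have alone: "(i,j) \<in> D \<Longrightarrow> c - 1 \<le> j \<Longrightarrow> (i,j) = (0, c-1)" for i j
    using ferrers_downward[OF F, of i j 0 j] ferrers_downward[OF F, of i j 1 "c-1"] A top c_def
    by (cases "i = 0") force+
  have eD: "(0, c-1) \<in> D" using c1 top by simp
  then show "{p\<in>D. snd p = c - 1} = col_segment 0 (c - 1)"
    unfolding col_segment_def using alone by force
  show "(0, c-1) \<in> P"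
    using tlt_col_pointed[OF T eD] alone tlt_pointed_subset[OF T] by blast
  show "is_corner D (0, c - 1)" unfolding is_corner_def using eD alone by force
  show "2 \<le> c"
  proof (rule ccontr)
    assume "\<not> 2 \<le> c"
    then have "P \<subseteq> {(0,0)}" using alone tlt_pointed_subset[OF T] c1 by fastforce
    then show False using n card_mono[of "{(0::nat,0::nat)}" P] by simp
  qed
qed

lemma bij_betw_extend_top_row:
  assumes n: "2 \<le> n"
  shows "bij_betw extend_top_row (tableaux (n - 1)) (tableaux_top_row_longer n)"
proof -
  have extend: "extend_top_row (D, P) \<in> tableaux_top_row_longer n"
    and shrink_extend: "shrink_top_row (extend_top_row (D, P)) = (D, P)"
    if "(D, P) \<in> tableaux (n - 1)" for D P
  proof -
    have T: "tree_like_tableau D P" and c: "card P = n - 1" using that unfolding tableaux_def by auto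
    have "0 \<in> rows_of D" unfolding rows_of_def using ferrers_origin[OF tlt_ferrers[OF T]] by simp
    then show "extend_top_row (D, P) \<in> tableaux_top_row_longer n"
      using tlt_add_col[OF T _ refl] card_add_col_pointed[OF tlt_finite_pointed[OF T]]
        extend_top_row_facts[OF T] c n
      unfolding tableaux_top_row_longer_def tableaux_def by simp
    show "shrink_top_row (extend_top_row (D, P)) = (D, P)"
      using extend_top_row_facts(1)[OF T] by (simp add: delete_col_add_col_diagram delete_col_add_col_pointed)
  qed
  have shrink: "shrink_top_row (D, P) \<in> tableaux (n - 1)"
    and extend_shrink: "extend_top_row (shrink_top_row (D, P)) = (D, P)"
    if "(D, P) \<in> tableaux_top_row_longer n" for D P
  proof -
    have T: "tree_like_tableau D P" and c: "card P = n" and A: "(1, row_length D 0 - 1) \<notin> D"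
      using that unfolding tableaux_top_row_longer_def tableaux_def by auto
    note last = top_row_longer_last_cell[OF T A, unfolded c, OF n]
    have L: "\<exists>j'<row_length D 0 - 1. (0, j') \<in> P" using tlt_root[OF T] last(4) by (intro exI[of _ 0]) auto
    show "shrink_top_row (D, P) \<in> tableaux (n - 1)"
      using tlt_delete_col[OF T last(2,3) L] card_delete_col_pointed[OF T last(2,3) L] c
      unfolding tableaux_def by simp
    note left_attached_corner_col_pointed_set[OF T last(2,3) L]
    then show "extend_top_row (shrink_top_row (D, P)) = (D, P)"
      using row_length_delete_col[OF T last(2,3) L] add_col_delete_col_diagram[OF last(1)]
        add_col_delete_col_pointed last(4) by simp
  qed
  show ?thesis
    by (rule bij_betw_byWitness[where f'=shrink_top_row]) (use extend shrink_extend shrink extend_shrink in auto)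
qed

lemma top_pointed_sum_top_row_longer:
  assumes n: "2 \<le> n"
  shows "(\<Sum>T\<in>tableaux_top_row_longer n. (x::nat) ^ card (top_pointed (snd T)))
    = x * (\<Sum>T\<in>tableaux (n-1). x ^ card (top_pointed (snd T)))"
proof -
  have "(\<Sum>T\<in>tableaux_top_row_longer n. x ^ card (top_pointed (snd T)))
      = (\<Sum>T\<in>tableaux (n-1). x ^ card (top_pointed (snd (extend_top_row T))))"
    using sum.reindex_bij_betw[OF bij_betw_extend_top_row[OF n], symmetric] .
  also have "\<dots> = (\<Sum>T\<in>tableaux (n-1). x * x ^ card (top_pointed (snd T)))"
  proof (rule sum.cong[OF refl], clarify)
    fix D P assume "(D, P) \<in> tableaux (n - 1)"
    then have T: "tree_like_tableau D P" unfolding tableaux_def by auto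
    show "x ^ card (top_pointed (snd (extend_top_row (D, P)))) = x * x ^ card (top_pointed (snd (D, P)))"
      using extend_top_row_facts(3,4)[OF T] finite_top_pointed[OF T] by simp
  qed
  finally show ?thesis by (simp add: sum_distrib_left)
qed

text \<open>If the top two rows have equal length, merging them loses only the leftmost pointed cell
  (1,y) of the second row, which lies below the pointed cell (0,y). The merge is undone by
  split_top_row, given y and the set K of top-row pointed cells right of y.\<close>

definition second_row_first :: "cells \<Rightarrow> nat" where
  "second_row_first P = (LEAST j. (1, j) \<in> P)"

definition drop_top_row :: "cells \<Rightarrow> cells" where
  "drop_top_row D = {(i,j). (Suc i, j) \<in> D}"

definition merge_top_rows :: "cells \<Rightarrow> nat \<Rightarrow> cells" where
  "merge_top_rows P y = {(i,j). (i = 0 \<and> ((0,j) \<in> P \<or> ((1,j) \<in> P \<and> j \<noteq> y))) \<or> (0 < i \<and> (Suc i, j) \<in> P)}"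

definition top_pointed_right :: "cells \<Rightarrow> nat \<Rightarrow> nat set" where
  "top_pointed_right P y = {j. (0,j) \<in> P \<and> y < j}"

lemma ferrers_drop_top_row:
  assumes F: "ferrers D" and "(1,0) \<in> D"
  shows "ferrers (drop_top_row D)"
proof (rule ferrersI)
  have "drop_top_row D \<subseteq> (\<lambda>(i,j). (i - 1, j)) ` D" unfolding drop_top_row_def by force
  then show "finite (drop_top_row D)" using F unfolding ferrers_def by (meson finite_imageI finite_subset)
  show "(0,0) \<in> drop_top_row D" unfolding drop_top_row_def using assms(2) by simp
  fix i j i' j' assume "(i,j) \<in> drop_top_row D" "i' \<le> i" "j' \<le> j"
  then show "(i',j') \<in> drop_top_row D"
    unfolding drop_top_row_def using ferrers_downward[OF F, of "Suc i" j "Suc i'" j'] by simp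
qed

definition double_top_row :: "cells \<Rightarrow> cells" where
  "double_top_row D = {(i,j). (i = 0 \<and> (0,j) \<in> D) \<or> (0 < i \<and> (i - 1, j) \<in> D)}"

definition split_top_row :: "cells \<Rightarrow> nat \<Rightarrow> nat set \<Rightarrow> cells" where
  "split_top_row P y K = {(i,j). (i = 0 \<and> (0,j) \<in> P \<and> (j \<le> y \<or> j \<in> K)) \<or>
      (i = 1 \<and> (j = y \<or> ((0,j) \<in> P \<and> y < j \<and> j \<notin> K))) \<or> (2 \<le> i \<and> (i - 1, j) \<in> P)}"

lemma mem_split_top_row: "(i,j) \<in> split_top_row P y K \<longleftrightarrow> (i = 0 \<and> (0,j) \<in> P \<and> (j \<le> y \<or> j \<in> K)) \<or>
      (i = 1 \<and> (j = y \<or> ((0,j) \<in> P \<and> y < j \<and> j \<notin> K))) \<or> (2 \<le> i \<and> (i - 1, j) \<in> P)"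
  unfolding split_top_row_def by simp

lemma ferrers_double_top_row:
  assumes F: "ferrers D"
  shows "ferrers (double_top_row D)"
proof (rule ferrersI)
  have "double_top_row D \<subseteq> D \<union> (\<lambda>(i,j). (Suc i, j)) ` D" unfolding double_top_row_def by force
  then show "finite (double_top_row D)" using F unfolding ferrers_def by (meson finite_UnI finite_imageI finite_subset)
  show "(0,0) \<in> double_top_row D" unfolding double_top_row_def using ferrers_origin[OF F] by simp
  fix i j i' j' assume a: "(i,j) \<in> double_top_row D" "i' \<le> i" "j' \<le> j"
  have c: "(i = 0 \<and> (0,j) \<in> D) \<or> (0 < i \<and> (i - 1, j) \<in> D)" using a(1) unfolding double_top_row_def by simp
  show "(i',j') \<in> double_top_row D"
  proof (cases "i' = 0")
    case True
    have "(0,j') \<in> D" using c ferrers_downward[OF F, of 0 j 0 j'] ferrers_downward[OF F, of "i - 1" j 0 j'] a(3)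
      by auto
    then show ?thesis unfolding double_top_row_def using True by simp
  next
    case False
    then have "(i' - 1, j') \<in> D" using c a ferrers_downward[OF F, of "i - 1" j "i' - 1" j'] by auto
    then show ?thesis unfolding double_top_row_def using False by simp
  qed
qed

context
  fixes D P :: "cells"
  assumes T: "tree_like_tableau D P" and equal: "(1, row_length D 0 - 1) \<in> D"
begin

lemma top_rows_equal_mem: "(1,j) \<in> D \<longleftrightarrow> (0,j) \<in> D"
  using ferrers_downward[OF tlt_ferrers[OF T], of 1 j 0 j] ferrers_downward[OF tlt_ferrers[OF T] equal, of 1 j]
    ferrers_mem_iff_less_row_length[OF tlt_ferrers[OF T], of 0 j] by auto

lemma second_row_first_pointed: "(1, second_row_first P) \<in> P"
proof -
  have "(1,0) \<in> D" using ferrers_downward[OF tlt_ferrers[OF T] equal, of 1 0] by simp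
  then obtain j0 where "(1,j0) \<in> P" using tlt_row_pointed[OF T] by blast
  then show ?thesis unfolding second_row_first_def by (rule LeastI)
qed

lemma second_row_first_above: "(0, second_row_first P) \<in> P"
proof -
  have "\<not> (\<exists>j'<second_row_first P. (1, j') \<in> P)"
    unfolding second_row_first_def using not_less_Least by blast
  then show ?thesis using tlt_left_xor_above[OF T second_row_first_pointed] by force
qed

lemma second_row_other:
  assumes "(1,j) \<in> P" "j \<noteq> second_row_first P"
  shows "second_row_first P < j" "(0,j) \<notin> P"
proof -
  have "second_row_first P \<le> j" unfolding second_row_first_def using assms(1) by (rule Least_le)
  then show yj: "second_row_first P < j" using assms(2) by simp
  then show "(0,j) \<notin> P"
    using tlt_left_xor_above[OF T assms(1)] second_row_first_pointed by auto
qed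

lemma merge_top_rows_left_xor_above:
  assumes p: "(i,j) \<in> merge_top_rows P y" "(i,j) \<noteq> (0,0)" and y: "y = second_row_first P"
  shows "(\<exists>j'<j. (i,j') \<in> merge_top_rows P y) \<noteq> (\<exists>i'<i. (i',j) \<in> merge_top_rows P y)"
proof (cases "i = 0")
  case True
  moreover have "(0,0) \<in> merge_top_rows P y" unfolding merge_top_rows_def using tlt_root[OF T] by simp
  ultimately show ?thesis using p(2) by auto
next
  case False
  then have sP: "(Suc i, j) \<in> P" using p(1) unfolding merge_top_rows_def by auto
  have top: "(0,j) \<in> merge_top_rows P y \<longleftrightarrow> (\<exists>i'<2. (i',j) \<in> P)"
    using second_row_first_above y unfolding merge_top_rows_def by (auto simp: less_2_cases_iff)
  have "(\<exists>i'<i. (i',j) \<in> merge_top_rows P y) \<longleftrightarrow> (0,j) \<in> merge_top_rows P y \<or> (\<exists>i'<i. 0 < i' \<and> (Suc i',j) \<in> P)"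
    using False unfolding merge_top_rows_def by auto
  also have "\<dots> \<longleftrightarrow> (\<exists>i'<Suc i. (i',j) \<in> P)"
    unfolding top using False by (auto, metis Suc_less_eq gr0_conv_Suc less_2_cases_iff, metis One_nat_def less_Suc_eq_0_disj less_2_cases_iff nat_neq_iff)
  finally have U: "(\<exists>i'<i. (i',j) \<in> merge_top_rows P y) = (\<exists>i'<Suc i. (i',j) \<in> P)" .
  have L: "(\<exists>j'<j. (i,j') \<in> merge_top_rows P y) = (\<exists>j'<j. (Suc i,j') \<in> P)"
    unfolding merge_top_rows_def using False by auto
  show ?thesis unfolding L U using tlt_left_xor_above[OF T sP] by simp
qed

lemma tlt_merge_top_rows: "tree_like_tableau (drop_top_row D) (merge_top_rows P (second_row_first P))"
proof (rule tree_like_tableauI)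
  let ?y = "second_row_first P"
  show "ferrers (drop_top_row D)"
    using ferrers_drop_top_row[OF tlt_ferrers[OF T]] ferrers_downward[OF tlt_ferrers[OF T] equal, of 1 0] by simp
  show "merge_top_rows P ?y \<subseteq> drop_top_row D"
    unfolding merge_top_rows_def drop_top_row_def using tlt_pointed_subset[OF T] top_rows_equal_mem by auto
  show "(0,0) \<in> merge_top_rows P ?y" unfolding merge_top_rows_def using tlt_root[OF T] by simp
  show "\<And>i j. (i,j) \<in> merge_top_rows P ?y \<Longrightarrow> (i,j) \<noteq> (0,0) \<Longrightarrow>
      (\<exists>j'<j. (i,j') \<in> merge_top_rows P ?y) \<noteq> (\<exists>i'<i. (i',j) \<in> merge_top_rows P ?y)"
    using merge_top_rows_left_xor_above by blast
next
  fix i j assume "(i,j) \<in> drop_top_row D"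
  then obtain j' where j': "(Suc i, j') \<in> P" using tlt_row_pointed[OF T] unfolding drop_top_row_def by auto
  show "\<exists>j'. (i,j') \<in> merge_top_rows P (second_row_first P)"
  proof (cases "i = 0")
    case True
    then show ?thesis using tlt_root[OF T] unfolding merge_top_rows_def by (intro exI[of _ 0]) simp
  next
    case False then show ?thesis using j' unfolding merge_top_rows_def by (intro exI[of _ j']) simp
  qed
next
  fix i j assume "(i,j) \<in> drop_top_row D"
  then obtain i' where i': "(i', j) \<in> P" using tlt_col_pointed[OF T] unfolding drop_top_row_def by auto
  show "\<exists>i'. (i',j) \<in> merge_top_rows P (second_row_first P)"
  proof (cases "i' \<le> 1")
    case True
    then have "(0,j) \<in> merge_top_rows P (second_row_first P)"
      using i' second_row_first_above unfolding merge_top_rows_def by (auto simp: le_Suc_eq)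
    then show ?thesis by blast
  next
    case False
    then have "(i' - 1, j) \<in> merge_top_rows P (second_row_first P)" using i' unfolding merge_top_rows_def by auto
    then show ?thesis by blast
  qed
qed

lemma card_merge_top_rows: "card (merge_top_rows P (second_row_first P)) = card P - 1"
proof -
  let ?y = "second_row_first P"
  define h where "h = (\<lambda>(i::nat,j::nat). (i - 1, j))"
  have "inj_on h (P - {(1,?y)})"
  proof (rule inj_onI)
    fix p q assume p: "p \<in> P - {(1,?y)}" and q: "q \<in> P - {(1,?y)}" and "h p = h q"
    then obtain i i' j where pq: "p = (i,j)" "q = (i',j)" "i - 1 = i' - 1"
      unfolding h_def by (cases p, cases q) auto
    then show "p = q" using p q second_row_other[of j] by (cases i; cases i') auto
  qed
  moreover have "h ` (P - {(1,?y)}) = merge_top_rows P ?y"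
  proof (intro equalityI subsetI)
    fix q assume "q \<in> h ` (P - {(1,?y)})"
    then obtain i j where "(i,j) \<in> P" "(i,j) \<noteq> (1,?y)" "q = (i - 1, j)" unfolding h_def by auto
    then show "q \<in> merge_top_rows P ?y" unfolding merge_top_rows_def
      by (cases i; cases "i - 1") auto
  next
    fix q assume "q \<in> merge_top_rows P ?y"
    then consider j where "q = (0,j)" "(0,j) \<in> P" | j where "q = (0,j)" "(1,j) \<in> P" "j \<noteq> ?y"
      | i j where "q = (i,j)" "0 < i" "(Suc i, j) \<in> P"
      unfolding merge_top_rows_def by auto
    then show "q \<in> h ` (P - {(1,?y)})"
      by cases (force simp: h_def intro: rev_image_eqI)+
  qed
  ultimately have "card (merge_top_rows P ?y) = card (P - {(1,?y)})" by (metis card_image)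
  also have "\<dots> = card P - 1" using second_row_first_pointed tlt_finite_pointed[OF T] by simp
  finally show ?thesis .
qed

lemma merge_top_rows_top_pointed:
  "second_row_first P \<in> top_pointed (merge_top_rows P (second_row_first P))"
  "top_pointed_right P (second_row_first P) \<subseteq> {j \<in> top_pointed (merge_top_rows P (second_row_first P)). second_row_first P < j}"
  unfolding top_pointed_def merge_top_rows_def top_pointed_right_def using second_row_first_above by auto

lemma split_merge_top_rows:
  "double_top_row (drop_top_row D) = D"
  "split_top_row (merge_top_rows P (second_row_first P)) (second_row_first P)
     (top_pointed_right P (second_row_first P)) = P"
proof -
  show "double_top_row (drop_top_row D) = D"
  proof (intro equalityI subsetI)
    fix p assume "p \<in> double_top_row (drop_top_row D)"
    then show "p \<in> D" unfolding double_top_row_def drop_top_row_def using top_rows_equal_mem by auto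
  next
    fix p assume pD: "p \<in> D"
    obtain i j where p: "p = (i,j)" by (cases p)
    show "p \<in> double_top_row (drop_top_row D)"
    proof (cases "i = 0")
      case False then have "Suc (i - 1) = i" by simp
      then show ?thesis using pD False unfolding p double_top_row_def drop_top_row_def by auto
    qed (use pD top_rows_equal_mem in \<open>auto simp: p double_top_row_def drop_top_row_def\<close>)
  qed
  let ?y = "second_row_first P"
  show "split_top_row (merge_top_rows P ?y) ?y (top_pointed_right P ?y) = P"
  proof (intro equalityI subsetI)
    fix p assume "p \<in> split_top_row (merge_top_rows P ?y) ?y (top_pointed_right P ?y)"
    then obtain i j where p: "p = (i,j)" and c: "(i,j) \<in> split_top_row (merge_top_rows P ?y) ?y (top_pointed_right P ?y)"
      by (cases p) auto
    show "p \<in> P" using c second_row_first_pointed second_row_other[of j]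
      unfolding p split_top_row_def merge_top_rows_def top_pointed_right_def by (auto split: if_splits)
  next
    fix p assume pP: "p \<in> P"
    obtain i j where p: "p = (i,j)" by (cases p)
    consider "i = 0" | "i = 1" | "2 \<le> i" by linarith
    then show "p \<in> split_top_row (merge_top_rows P ?y) ?y (top_pointed_right P ?y)"
    proof cases
      case 2 then show ?thesis using pP second_row_other[of j]
        unfolding p split_top_row_def merge_top_rows_def top_pointed_right_def by auto
    qed (use pP in \<open>auto simp: p split_top_row_def merge_top_rows_def top_pointed_right_def\<close>)
  qed
qed

end

context
  fixes D P :: "cells" and y :: nat and K :: "nat set"
  assumes T: "tree_like_tableau D P" and y: "y \<in> top_pointed P" and K: "K \<subseteq> {j \<in> top_pointed P. y < j}"
begin

lemma split_top_row_left_xor_above: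
  assumes p: "(i,j) \<in> split_top_row P y K" "(i,j) \<noteq> (0,0)"
  shows "(\<exists>j'<j. (i,j') \<in> split_top_row P y K) \<noteq> (\<exists>i'<i. (i',j) \<in> split_top_row P y K)"
proof -
  have y0: "(0,y) \<in> P" using y unfolding top_pointed_def by simp
  have r00: "(0,0) \<in> split_top_row P y K" unfolding mem_split_top_row using tlt_root[OF T] by simp
  consider "i = 0" | "i = 1" "j = y" | "i = 1" "j \<noteq> y" | "2 \<le> i" by linarith
  then show ?thesis
  proof cases
    case 1
    then show ?thesis using p(2) r00 by auto
  next
    case 2
    then show ?thesis unfolding mem_split_top_row using y0 by auto
  next
    case 3
    then have c: "(0,j) \<in> P" "y < j" "j \<notin> K" using p(1) unfolding mem_split_top_row by auto
    have "(1,y) \<in> split_top_row P y K" unfolding mem_split_top_row by simp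
    then show ?thesis using 3 c unfolding mem_split_top_row by auto
  next
    case 4
    then have pP: "(i - 1, j) \<in> P" and nr: "(i - 1, j) \<noteq> (0,0)" using p(1) unfolding mem_split_top_row by auto
    have L: "(\<exists>j'<j. (i,j') \<in> split_top_row P y K) = (\<exists>j'<j. (i - 1,j') \<in> P)"
      unfolding mem_split_top_row using 4 by auto
    have row0: "(0,j) \<in> split_top_row P y K \<or> (1,j) \<in> split_top_row P y K" if "(0,j) \<in> P"
      using that unfolding mem_split_top_row by auto
    have U: "(\<exists>i'<i. (i',j) \<in> split_top_row P y K) = (\<exists>i'<i - 1. (i',j) \<in> P)"
    proof
      assume "\<exists>i'<i. (i',j) \<in> split_top_row P y K"
      then obtain i'' where i'': "i'' < i" "(i'',j) \<in> split_top_row P y K" by blast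
      then consider "(0,j) \<in> P" | "2 \<le> i''" "(i'' - 1, j) \<in> P"
        using y0 unfolding mem_split_top_row by auto
      then show "\<exists>i'<i - 1. (i',j) \<in> P"
      proof cases
        case 2 then show ?thesis using i''(1) by (intro exI[of _ "i'' - 1"]) auto
      qed (use 4 in \<open>intro exI[of _ 0], auto\<close>)
    next
      assume "\<exists>i'<i - 1. (i',j) \<in> P"
      then obtain i' where i': "i' < i - 1" "(i',j) \<in> P" by blast
      show "\<exists>i'<i. (i',j) \<in> split_top_row P y K"
      proof (cases "i' = 0")
        case True
        then show ?thesis using row0 i' 4 by (metis One_nat_def less_2_cases_iff less_le_trans pos2)
      next
        case False
        then have "(i' + 1, j) \<in> split_top_row P y K" unfolding mem_split_top_row using i' by auto
        then show ?thesis using i' by (intro exI[of _ "i' + 1"]) auto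
      qed
    qed
    show ?thesis unfolding L U using tlt_left_xor_above[OF T pP nr] .
  qed
qed

lemma tlt_split_top_row: "tree_like_tableau (double_top_row D) (split_top_row P y K)"
proof (rule tree_like_tableauI[OF ferrers_double_top_row[OF tlt_ferrers[OF T]]])
  have y0: "(0,y) \<in> P" using y unfolding top_pointed_def by simp
  show "split_top_row P y K \<subseteq> double_top_row D"
    using tlt_pointed_subset[OF T] y0 unfolding split_top_row_def double_top_row_def by auto
  show "(0,0) \<in> split_top_row P y K" unfolding mem_split_top_row using tlt_root[OF T] by simp
next
  fix i j assume a: "(i,j) \<in> double_top_row D"
  consider "i = 0" | "i = 1" | "2 \<le> i" by linarith
  then show "\<exists>j'. (i,j') \<in> split_top_row P y K"
  proof cases
    case 1 then show ?thesis unfolding mem_split_top_row using tlt_root[OF T] by (intro exI[of _ 0]) simp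
  next
    case 2 then show ?thesis unfolding mem_split_top_row by (intro exI[of _ y]) simp
  next
    case 3
    then have "(i - 1, j) \<in> D" using a unfolding double_top_row_def by auto
    then obtain j' where "(i - 1, j') \<in> P" using tlt_row_pointed[OF T] by blast
    then show ?thesis unfolding mem_split_top_row using 3 by (intro exI[of _ j']) simp
  qed
next
  fix i j assume a: "(i,j) \<in> double_top_row D"
  then have "(0,j) \<in> D"
    using ferrers_downward[OF tlt_ferrers[OF T], of "i - 1" j 0 j] unfolding double_top_row_def by auto
  then obtain i' where i': "(i', j) \<in> P" using tlt_col_pointed[OF T] by blast
  show "\<exists>i'. (i',j) \<in> split_top_row P y K"
  proof (cases "i' = 0")
    case True then show ?thesis using i' unfolding mem_split_top_row by (cases "j \<le> y \<or> j \<in> K") auto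
  next
    case False
    then have "(i' + 1, j) \<in> split_top_row P y K" unfolding mem_split_top_row using i' by auto
    then show ?thesis by blast
  qed
qed (fact split_top_row_left_xor_above)

lemma card_split_top_row: "card (split_top_row P y K) = card P + 1"
proof -
  define k where "k = (\<lambda>(i::nat,j::nat). if i = 0 then (if j \<le> y \<or> j \<in> K then (0,j) else (1,j)) else (i+1,j))"
  have inj: "inj_on k P" by (rule inj_onI) (auto simp: k_def split: if_splits)
  have img: "split_top_row P y K = insert (1,y) (k ` P)"
  proof (intro equalityI subsetI)
    fix q assume "q \<in> split_top_row P y K"
    then consider j where "q = (0,j)" "(0,j) \<in> P" "j \<le> y \<or> j \<in> K" | "q = (1,y)"
      | j where "q = (1,j)" "(0,j) \<in> P" "y < j" "j \<notin> K" | i j where "q = (i,j)" "2 \<le> i" "(i - 1, j) \<in> P"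
      unfolding split_top_row_def by auto
    then show "q \<in> insert (1,y) (k ` P)"
      by cases (force simp: k_def intro: rev_image_eqI)+
  next
    fix q assume "q \<in> insert (1,y) (k ` P)"
    then show "q \<in> split_top_row P y K"
      using K unfolding k_def split_top_row_def top_pointed_def by (auto split: if_splits)
  qed
  have "(1,y) \<notin> k ` P" unfolding k_def by (auto split: if_splits)
  then show ?thesis unfolding img using card_image[OF inj] tlt_finite_pointed[OF T] by simp
qed

lemma double_top_row_equal: "(1, row_length (double_top_row D) 0 - 1) \<in> double_top_row D"
proof -
  have "row_length (double_top_row D) 0 = row_length D 0" unfolding row_length_def double_top_row_def by simp
  moreover have "(0, row_length D 0 - 1) \<in> D"
    using ferrers_mem_iff_less_row_length[OF tlt_ferrers[OF T]] ferrers_row_length_top_pos[OF tlt_ferrers[OF T]] by simp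
  ultimately show ?thesis unfolding double_top_row_def by simp
qed

lemma top_pointed_split_top_row: "top_pointed (split_top_row P y K) = {j \<in> top_pointed P. j \<le> y \<or> j \<in> K}"
  unfolding top_pointed_def split_top_row_def by auto

lemma merge_split_top_row:
  shows "drop_top_row (double_top_row D) = D" "second_row_first (split_top_row P y K) = y"
    and "merge_top_rows (split_top_row P y K) y = P" "top_pointed_right (split_top_row P y K) y = K"
proof -
  show "drop_top_row (double_top_row D) = D" unfolding drop_top_row_def double_top_row_def by auto
  have "(1,y) \<in> split_top_row P y K" "\<And>j. (1,j) \<in> split_top_row P y K \<Longrightarrow> y \<le> j"
    unfolding split_top_row_def by auto
  then show "second_row_first (split_top_row P y K) = y" unfolding second_row_first_def
    by (rule Least_equality)
  show "merge_top_rows (split_top_row P y K) y = P"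
  proof (intro equalityI subsetI)
    fix p assume "p \<in> merge_top_rows (split_top_row P y K) y"
    then show "p \<in> P" unfolding split_top_row_def merge_top_rows_def by auto
  next
    fix p assume "p \<in> P"
    then show "p \<in> merge_top_rows (split_top_row P y K) y"
      unfolding split_top_row_def merge_top_rows_def by (cases p; cases "fst p = 0") auto
  qed
  show "top_pointed_right (split_top_row P y K) y = K"
    using K unfolding top_pointed_right_def split_top_row_def top_pointed_def by auto
qed

end

lemma sum_power_card_Pow:
  assumes "finite G"
  shows "(\<Sum>K\<in>Pow G. (x::nat) ^ card K) = (1 + x) ^ card G"
proof -
  have "(\<Prod>a\<in>G. x + 1) = (\<Sum>X\<in>Pow G. (\<Prod>a\<in>X. x) * (\<Prod>a\<in>G - X. 1))"
    by (rule prod_add) fact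
  then show ?thesis by (simp add: add.commute)
qed

lemma sum_power_split:
  fixes R :: "nat set"
  assumes "finite R"
  shows "(\<Sum>y\<in>R. (x::nat) ^ card {j\<in>R. j \<le> y} * (1 + x) ^ card {j\<in>R. y < j}) + x ^ (card R + 1)
    = x * (1 + x) ^ card R"
  using assms
proof (induction R rule: finite_linorder_max_induct)
  case empty
  then show ?case by simp
next
  case (insert b A)
  have bA: "b \<notin> A" using insert.hyps(2) by auto
  have e1: "\<And>y. y \<in> A \<Longrightarrow> {j\<in>insert b A. j \<le> y} = {j\<in>A. j \<le> y}" using insert.hyps(2) by auto
  have e2: "\<And>y. y \<in> A \<Longrightarrow> card {j\<in>insert b A. y < j} = card {j\<in>A. y < j} + 1"
  proof -
    fix y assume y: "y \<in> A"
    have "{j\<in>insert b A. y < j} = insert b {j\<in>A. y < j}" using insert.hyps(2) y by auto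
    then show "card {j\<in>insert b A. y < j} = card {j\<in>A. y < j} + 1" using bA insert.hyps(1) by simp
  qed
  have e3: "{j\<in>insert b A. j \<le> b} = insert b A" using insert.hyps(2) by auto
  have e4: "{j\<in>insert b A. b < j} = {}" using insert.hyps(2) by auto
  have cI: "card (insert b A) = card A + 1" using bA insert.hyps(1) by simp
  have "(\<Sum>y\<in>insert b A. x ^ card {j\<in>insert b A. j \<le> y} * (1 + x) ^ card {j\<in>insert b A. y < j})
     = x ^ (card A + 1) + (\<Sum>y\<in>A. x ^ card {j\<in>insert b A. j \<le> y} * (1 + x) ^ card {j\<in>insert b A. y < j})"
    using bA insert.hyps(1) e3 e4 cI by simp
  also have "(\<Sum>y\<in>A. x ^ card {j\<in>insert b A. j \<le> y} * (1 + x) ^ card {j\<in>insert b A. y < j})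
     = (1 + x) * (\<Sum>y\<in>A. x ^ card {j\<in>A. j \<le> y} * (1 + x) ^ card {j\<in>A. y < j})"
    unfolding sum_distrib_left
  proof (rule sum.cong)
    fix y assume y: "y \<in> A"
    show "x ^ card {j\<in>insert b A. j \<le> y} * (1 + x) ^ card {j\<in>insert b A. y < j} =
      (1 + x) * (x ^ card {j\<in>A. j \<le> y} * (1 + x) ^ card {j\<in>A. y < j})"
      unfolding e1[OF y] e2[OF y] by (simp add: algebra_simps)
  qed simp
  finally have s: "(\<Sum>y\<in>insert b A. x ^ card {j\<in>insert b A. j \<le> y} * (1 + x) ^ card {j\<in>insert b A. y < j})
     = x ^ (card A + 1) + (1 + x) * (\<Sum>y\<in>A. x ^ card {j\<in>A. j \<le> y} * (1 + x) ^ card {j\<in>A. y < j})" .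
  define S where "S = (\<Sum>y\<in>A. x ^ card {j\<in>A. j \<le> y} * (1 + x) ^ card {j\<in>A. y < j})"
  have ih: "S + x ^ (card A + 1) = x * (1 + x) ^ card A" using insert.IH unfolding S_def .
  have "x ^ (card A + 1) + (1 + x) * S + x ^ (card A + 1 + 1) = (1 + x) * (S + x ^ (card A + 1))"
    by (simp add: algebra_simps)
  also have "\<dots> = x * (1 + x) ^ (card A + 1)" unfolding ih by (simp add: algebra_simps)
  finally show ?case unfolding s cI S_def .
qed

definition split_data :: "nat \<Rightarrow> ((cells \<times> cells) \<times> nat \<times> nat set) set" where
  "split_data m = (SIGMA T:tableaux m. SIGMA y:top_pointed (snd T). Pow {j \<in> top_pointed (snd T). y < j})"

fun split_tableau :: "(cells \<times> cells) \<times> nat \<times> nat set \<Rightarrow> cells \<times> cells" where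
  "split_tableau ((D, P), y, K) = (double_top_row D, split_top_row P y K)"

fun merge_tableau :: "cells \<times> cells \<Rightarrow> (cells \<times> cells) \<times> nat \<times> nat set" where
  "merge_tableau (D, P) = ((drop_top_row D, merge_top_rows P (second_row_first P)),
     second_row_first P, top_pointed_right P (second_row_first P))"

lemma bij_betw_split_tableau:
  assumes n: "1 \<le> n"
  shows "bij_betw split_tableau (split_data (n - 1)) (tableaux_top_rows_equal n)"
proof -
  have split: "split_tableau X \<in> tableaux_top_rows_equal n \<and> merge_tableau (split_tableau X) = X"
    if "X \<in> split_data (n - 1)" for X
  proof -
    obtain D P y K where X: "X = ((D, P), y, K)" by (metis prod.exhaust)
    have T: "tree_like_tableau D P" and y: "y \<in> top_pointed P" and K: "K \<subseteq> {j \<in> top_pointed P. y < j}"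
      and c: "card P = n - 1" using that unfolding X split_data_def tableaux_def by auto
    show ?thesis
      using tlt_split_top_row[OF T y K] card_split_top_row[OF T y K] double_top_row_equal[OF T y K]
        merge_split_top_row[OF T y K] c n
      unfolding X tableaux_top_rows_equal_def tableaux_def by simp
  qed
  have merge: "merge_tableau T \<in> split_data (n - 1) \<and> split_tableau (merge_tableau T) = T"
    if "T \<in> tableaux_top_rows_equal n" for T
  proof -
    obtain D P where TT: "T = (D, P)" by (metis prod.exhaust)
    have T: "tree_like_tableau D P" and c: "card P = n" and equal: "(1, row_length D 0 - 1) \<in> D"
      using that unfolding TT tableaux_top_rows_equal_def tableaux_def by auto
    show ?thesis
      using tlt_merge_top_rows[OF T equal] card_merge_top_rows[OF T equal]
        merge_top_rows_top_pointed[OF T equal] split_merge_top_rows[OF T equal] c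
      unfolding TT split_data_def tableaux_def by simp
  qed
  show ?thesis
    by (rule bij_betw_byWitness[where f'=merge_tableau]) (use split merge in auto)
qed

lemma top_pointed_sum_top_rows_equal:
  assumes n: "1 \<le> n"
  shows "(\<Sum>T\<in>tableaux_top_rows_equal n. (x::nat) ^ card (top_pointed (snd T)))
    = (\<Sum>T\<in>tableaux (n-1). \<Sum>y\<in>top_pointed (snd T).
         x ^ card {j\<in>top_pointed (snd T). j \<le> y} * (1 + x) ^ card {j\<in>top_pointed (snd T). y < j})"
proof -
  let ?R = "\<lambda>T. top_pointed (snd T)"
  have fin: "finite (?R T)" if "T \<in> tableaux m" for T m
    using that finite_top_pointed unfolding tableaux_def by auto
  have split: "x ^ card (?R (split_tableau X)) = x ^ card {j\<in>?R (fst X). j \<le> fst (snd X)} * x ^ card (snd (snd X))"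
    if "X \<in> split_data (n - 1)" for X
  proof -
    obtain D P y K where X: "X = ((D,P),y,K)" by (metis prod.exhaust)
    have T: "tree_like_tableau D P" and y: "y \<in> top_pointed P" and K: "K \<subseteq> {j \<in> top_pointed P. y < j}"
      using that unfolding X split_data_def tableaux_def by auto
    have "finite K" by (rule finite_subset[OF _ finite_top_pointed[OF T]]) (use K in auto)
    then have "card {j \<in> top_pointed P. j \<le> y \<or> j \<in> K} = card {j \<in> top_pointed P. j \<le> y} + card K"
      using K finite_top_pointed[OF T] by (subst card_Un_disjoint[symmetric]) (auto intro: arg_cong[where f=card])
    then show ?thesis using top_pointed_split_top_row[OF T y K] by (simp add: X power_add)
  qed
  have "(\<Sum>T\<in>tableaux_top_rows_equal n. x ^ card (?R T)) = (\<Sum>X\<in>split_data (n-1). x ^ card (?R (split_tableau X)))"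
    using sum.reindex_bij_betw[OF bij_betw_split_tableau[OF n], symmetric] .
  also have "\<dots> = (\<Sum>X\<in>split_data (n-1). x ^ card {j\<in>?R (fst X). j \<le> fst (snd X)} * x ^ card (snd (snd X)))"
    using split by (rule sum.cong[OF refl])
  also have "\<dots> = (\<Sum>T\<in>tableaux (n-1). \<Sum>y\<in>?R T. \<Sum>K\<in>Pow {j \<in> ?R T. y < j}.
        x ^ card {j\<in>?R T. j \<le> y} * x ^ card K)"
    unfolding split_data_def using finite_tableaux fin
    by (simp add: sum.Sigma split_def finite_SigmaI)
  also have "\<dots> = (\<Sum>T\<in>tableaux (n-1). \<Sum>y\<in>?R T. x ^ card {j\<in>?R T. j \<le> y} * (1 + x) ^ card {j\<in>?R T. y < j})"
    using fin by (intro sum.cong refl) (simp add: sum_distrib_left[symmetric] sum_power_card_Pow)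
  finally show ?thesis .
qed

definition top_pointed_gf :: "nat \<Rightarrow> nat \<Rightarrow> nat" where
  "top_pointed_gf n x = (\<Sum>T\<in>tableaux n. x ^ card (top_pointed (snd T)))"

lemma top_pointed_gf_rec:
  assumes n: "2 \<le> n"
  shows "top_pointed_gf n x = x * top_pointed_gf (n-1) (1 + x)"
proof -
  have part: "tableaux n = tableaux_top_row_longer n \<union> tableaux_top_rows_equal n"
    and disj: "tableaux_top_row_longer n \<inter> tableaux_top_rows_equal n = {}"
    unfolding tableaux_top_row_longer_def tableaux_top_rows_equal_def by auto
  have fin: "finite (tableaux_top_row_longer n)" "finite (tableaux_top_rows_equal n)"
    using finite_tableaux[of n] part by auto
  have "top_pointed_gf n x = (\<Sum>T\<in>tableaux_top_row_longer n. x ^ card (top_pointed (snd T)))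
      + (\<Sum>T\<in>tableaux_top_rows_equal n. x ^ card (top_pointed (snd T)))"
    unfolding top_pointed_gf_def part using fin disj by (simp add: sum.union_disjoint)
  also have "\<dots> = (\<Sum>T\<in>tableaux (n-1). x ^ (card (top_pointed (snd T)) + 1)
      + (\<Sum>y\<in>top_pointed (snd T). x ^ card {j\<in>top_pointed (snd T). j \<le> y} * (1 + x) ^ card {j\<in>top_pointed (snd T). y < j}))"
    using n by (simp add: top_pointed_sum_top_row_longer top_pointed_sum_top_rows_equal sum.distrib sum_distrib_left)
  also have "\<dots> = (\<Sum>T\<in>tableaux (n-1). x * (1 + x) ^ card (top_pointed (snd T)))"
    by (intro sum.cong refl) (use sum_power_split finite_top_pointed in \<open>auto simp: tableaux_def add.commute\<close>)
  finally show ?thesis unfolding top_pointed_gf_def by (simp add: sum_distrib_left)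
qed

lemma top_pointed_gf_pochhammer: "1 \<le> n \<Longrightarrow> top_pointed_gf n x = pochhammer x n"
proof (induction n arbitrary: x rule: nat_induct_at_least)
  case base
  have "top_pointed {(0::nat,0::nat)} = {0}" unfolding top_pointed_def by auto
  then show ?case unfolding top_pointed_gf_def tableaux_1 by simp
next
  case (Suc m)
  have "top_pointed_gf (Suc m) x = x * top_pointed_gf m (1 + x)" using top_pointed_gf_rec[of "Suc m"] Suc.hyps by simp
  also have "\<dots> = x * pochhammer (x + 1) m" using Suc.IH by (simp add: add.commute)
  finally show ?case by (simp add: pochhammer_rec)
qed

lemma card_tableaux: "1 \<le> n \<Longrightarrow> card (tableaux n) = fact n"
  using top_pointed_gf_pochhammer[of n 1] by (simp add: top_pointed_gf_def pochhammer_fact)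

section \<open>Marked occupied corners\<close>

definition transpose_cells :: "cells \<Rightarrow> cells" where
  "transpose_cells X = (\<lambda>(i,j). (j,i)) ` X"

lemma mem_transpose_cells[simp]: "(i,j) \<in> transpose_cells X \<longleftrightarrow> (j,i) \<in> X"
  unfolding transpose_cells_def by force

lemma transpose_cells_involution[simp]: "transpose_cells (transpose_cells X) = X"
  unfolding transpose_cells_def by (force simp: image_image)

lemma card_transpose_cells: "card (transpose_cells X) = card X"
  unfolding transpose_cells_def by (rule card_image) (auto simp: inj_on_def)

lemma transpose_cells_mono: "S \<subseteq> X \<Longrightarrow> transpose_cells S \<subseteq> transpose_cells X"
  unfolding transpose_cells_def by auto

lemma ferrers_transpose_cells: "ferrers D \<Longrightarrow> ferrers (transpose_cells D)"
  by (rule ferrersI) (auto simp: ferrers_def transpose_cells_def intro: ferrers_downward)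

lemma tlt_transpose_cells: "tree_like_tableau D P \<Longrightarrow> tree_like_tableau (transpose_cells D) (transpose_cells P)"
proof (rule tree_like_tableauI)
  assume T: "tree_like_tableau D P"
  show "ferrers (transpose_cells D)" using ferrers_transpose_cells[OF tlt_ferrers[OF T]] .
  show "transpose_cells P \<subseteq> transpose_cells D" using transpose_cells_mono[OF tlt_pointed_subset[OF T]] .
  show "(0,0) \<in> transpose_cells P" using tlt_root[OF T] by simp
  show "(\<exists>j'<j. (i,j') \<in> transpose_cells P) \<noteq> (\<exists>i'<i. (i',j) \<in> transpose_cells P)"
    if "(i,j) \<in> transpose_cells P" "(i,j) \<noteq> (0,0)" for i j
    using tlt_left_xor_above[OF T, of j i] that by auto
  show "\<exists>j'. (i,j') \<in> transpose_cells P" if "(i,j) \<in> transpose_cells D" for i j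
    using tlt_col_pointed[OF T, of j i] that by auto
  show "\<exists>i'. (i',j) \<in> transpose_cells P" if "(i,j) \<in> transpose_cells D" for i j
    using tlt_row_pointed[OF T, of j i] that by auto
qed

lemma occupied_corners_transpose_cells:
  "occupied_corners (transpose_cells D) (transpose_cells P) = transpose_cells (occupied_corners D P)"
  unfolding occupied_corners_def is_corner_def transpose_cells_def by force

lemma rows_of_transpose_cells: "rows_of (transpose_cells D) = cols_of D"
  and cols_of_transpose_cells: "cols_of (transpose_cells D) = rows_of D"
  unfolding rows_of_def cols_of_def by simp_all

lemma fst_transpose_cells: "fst ` transpose_cells S = snd ` S"
  and snd_transpose_cells: "snd ` transpose_cells S = fst ` S"
  unfolding transpose_cells_def by force+

definition marked :: "nat \<Rightarrow> nat \<Rightarrow> ((cells \<times> cells) \<times> cells) set" where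
  "marked n k = {((D,P),S). (D,P) \<in> tableaux n \<and> S \<subseteq> occupied_corners D P \<and> card S = k}"

lemma marked_iff:
  "((D,P),S) \<in> marked n k \<longleftrightarrow> tree_like_tableau D P \<and> card P = n \<and> S \<subseteq> occupied_corners D P \<and> card S = k"
  unfolding marked_def tableaux_def by auto

lemma marked_transpose_cells:
  "((D,P),S) \<in> marked n k \<Longrightarrow> ((transpose_cells D, transpose_cells P), transpose_cells S) \<in> marked n k"
  unfolding marked_iff
  using tlt_transpose_cells card_transpose_cells occupied_corners_transpose_cells transpose_cells_mono by metis

lemma finite_marked: "finite (marked n k)"
proof (rule finite_subset)
  show "marked n k \<subseteq> tableaux n \<times> Pow ({..<n} \<times> {..<n})"
    unfolding marked_def tableaux_def occupied_corners_def
    using tlt_diagram_subset_square tlt_pointed_subset by fastforce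
  show "finite (tableaux n \<times> Pow ({..<n} \<times> {..<n}))" using finite_tableaux by simp
qed

lemma finite_marked_set: "X \<in> marked n k \<Longrightarrow> finite (snd X)"
  unfolding marked_def occupied_corners_def
  using tlt_finite_pointed finite_subset unfolding tableaux_def by fastforce

lemma card_marked_0:
  assumes "1 \<le> n"
  shows "card (marked n 0) = fact n"
proof -
  have "marked n 0 = (\<lambda>T. (T, {})) ` tableaux n"
  proof (intro equalityI subsetI)
    fix X assume X: "X \<in> marked n 0"
    then have "snd X = {}" using finite_marked_set[OF X] unfolding marked_def by auto
    then show "X \<in> (\<lambda>T. (T, {})) ` tableaux n" using X unfolding marked_def by force
  qed (auto simp: marked_def)
  then show ?thesis using card_tableaux[OF assms] by (simp add: card_image inj_on_def)
qed

definition corner_left :: "nat \<Rightarrow> nat \<Rightarrow> (((cells \<times> cells) \<times> cells) \<times> (nat \<times> nat)) set" where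
  "corner_left n k = {(((D,P),S),(i0,j0)). ((D,P),S) \<in> marked n k \<and> (i0,j0) \<in> S \<and> (\<exists>j'<j0. (i0,j') \<in> P)}"

definition corner_above :: "nat \<Rightarrow> nat \<Rightarrow> (((cells \<times> cells) \<times> cells) \<times> (nat \<times> nat)) set" where
  "corner_above n k = {(((D,P),S),(i0,j0)). ((D,P),S) \<in> marked n k \<and> (i0,j0) \<in> S \<and> \<not> (\<exists>j'<j0. (i0,j') \<in> P)}"

definition free_row :: "nat \<Rightarrow> nat \<Rightarrow> (((cells \<times> cells) \<times> cells) \<times> (nat + nat)) set" where
  "free_row n k = {(((D,P),S),e). ((D,P),S) \<in> marked n k \<and> (\<exists>i. e = Inl i \<and> i \<in> rows_of D \<and> i \<notin> fst ` S)}"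

definition free_col :: "nat \<Rightarrow> nat \<Rightarrow> (((cells \<times> cells) \<times> cells) \<times> (nat + nat)) set" where
  "free_col n k = {(((D,P),S),e). ((D,P),S) \<in> marked n k \<and> (\<exists>j. e = Inr j \<and> j \<in> cols_of D \<and> j \<notin> snd ` S)}"

fun remove_corner_col :: "((cells \<times> cells) \<times> cells) \<times> (nat \<times> nat) \<Rightarrow>
    ((cells \<times> cells) \<times> cells) \<times> (nat + nat)" where
  "remove_corner_col (((D,P),S),(i0,j0)) = (((delete_col j0 D, delete_col j0 P), delete_col j0 S), Inl i0)"

fun insert_corner_col :: "((cells \<times> cells) \<times> cells) \<times> (nat + nat) \<Rightarrow>
    ((cells \<times> cells) \<times> cells) \<times> (nat \<times> nat)" where
  "insert_corner_col (((D,P),S), Inl i0) =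
     (((add_col_diagram i0 (row_length D i0) D, add_col_pointed i0 (row_length D i0) P),
       add_col_pointed i0 (row_length D i0) S), (i0, row_length D i0))"

lemma remove_corner_col_mem:
  assumes "X \<in> corner_left n k"
  shows "remove_corner_col X \<in> free_row (n - 1) (k - 1)"
    and "insert_corner_col (remove_corner_col X) = X"
proof -
  obtain D P S i0 j0 where X: "X = (((D,P),S),(i0,j0))" by (metis prod.exhaust)
  have T: "tree_like_tableau D P" and cP: "card P = n" and So: "S \<subseteq> occupied_corners D P"
    and cS: "card S = k" and c: "(i0,j0) \<in> S" and L: "\<exists>j'<j0. (i0, j') \<in> P"
    using assms unfolding X corner_left_def marked_iff by auto
  have cP': "(i0,j0) \<in> P" and cc: "is_corner D (i0,j0)" using c So unfolding occupied_corners_def by auto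
  have Scol: "{p\<in>S. snd p = j0} = {(i0,j0)}"
    using left_attached_corner_col_pointed_set[OF T cP' cc L] So c unfolding occupied_corners_def by blast
  have "{p\<in>S. snd p \<noteq> j0} = S - {(i0,j0)}" using Scol by blast
  then have "card (delete_col j0 S) = k - 1"
    using card_delete_col[of j0 S] c cS finite_subset[OF So finite_occupied_corners[OF T]] by simp
  moreover have "i0 \<notin> fst ` delete_col j0 S"
  proof
    assume "i0 \<in> fst ` delete_col j0 S"
    then obtain j where "(i0, skip j0 j) \<in> S" unfolding delete_col_def by auto
    then have "skip j0 j = j0"
      using So cc corner_unique_in_row[OF tlt_ferrers[OF T]] unfolding occupied_corners_def by blast
    then show False using skip_neq by simp
  qed
  moreover have "delete_col j0 S \<subseteq> occupied_corners (delete_col j0 D) (delete_col j0 P)"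
    using delete_col_occupied_corners[OF tlt_ferrers[OF T]] So unfolding delete_col_def by blast
  ultimately show "remove_corner_col X \<in> free_row (n - 1) (k - 1)"
    using tlt_delete_col[OF T cP' cc L] card_delete_col_pointed[OF T cP' cc L] rows_of_delete_col[OF T cP' cc L] cP
    unfolding X free_row_def marked_iff by simp
  show "insert_corner_col (remove_corner_col X) = X" unfolding X
    using row_length_delete_col[OF T cP' cc L] add_col_delete_col_diagram[OF left_attached_corner_col_segment[OF T cP' cc L]]
      add_col_delete_col_pointed[OF left_attached_corner_col_pointed_set[OF T cP' cc L]] add_col_delete_col_pointed[OF Scol]
    by simp
qed

lemma insert_corner_col_mem:
  assumes "X \<in> free_row (n - 1) (k - 1)" and n: "2 \<le> n" and k: "1 \<le> k"
  shows "insert_corner_col X \<in> corner_left n k"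
    and "remove_corner_col (insert_corner_col X) = X"
proof -
  obtain D1 P1 S1 e where X: "X = (((D1,P1),S1),e)" by (metis prod.exhaust)
  obtain i0 where e: "e = Inl i0" and T: "tree_like_tableau D1 P1" and cP: "card P1 = n - 1"
    and So: "S1 \<subseteq> occupied_corners D1 P1" and cS: "card S1 = k - 1"
    and r: "i0 \<in> rows_of D1" and free: "i0 \<notin> fst ` S1"
    using assms(1) unfolding X free_row_def marked_iff by auto
  define j0 where "j0 = row_length D1 i0"
  have ins: "insert_corner_col (((D1,P1),S1),e)
      = (((add_col_diagram i0 j0 D1, add_col_pointed i0 j0 P1), add_col_pointed i0 j0 S1),(i0,j0))"
    unfolding e j0_def by simp
  have "add_col_pointed i0 j0 S1 \<subseteq> occupied_corners (add_col_diagram i0 j0 D1) (add_col_pointed i0 j0 P1)"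
    using insert_col_occupied_corners[OF T r j0_def So free] is_corner_add_col[OF T r j0_def]
    unfolding add_col_pointed_def occupied_corners_def by auto
  moreover have "card (add_col_pointed i0 j0 S1) = k" "card (add_col_pointed i0 j0 P1) = n"
    using card_add_col_pointed[OF finite_subset[OF So finite_occupied_corners[OF T]]]
      card_add_col_pointed[OF tlt_finite_pointed[OF T]] cP cS n k by simp_all
  moreover have "(i0,j0) \<in> add_col_pointed i0 j0 S1" unfolding add_col_pointed_def by simp
  ultimately show "insert_corner_col X \<in> corner_left n k"
    using tlt_add_col[OF T r j0_def] add_col_attached_left[OF T r j0_def]
    unfolding X ins corner_left_def marked_iff by simp
  show "remove_corner_col (insert_corner_col X) = X"
    unfolding X ins e by (simp add: delete_col_add_col_diagram delete_col_add_col_pointed)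
qed

lemma bij_betw_remove_corner_col:
  assumes n: "2 \<le> n" and k: "1 \<le> k"
  shows "bij_betw remove_corner_col (corner_left n k) (free_row (n - 1) (k - 1))"
  by (rule bij_betw_byWitness[where f'=insert_corner_col])
    (use remove_corner_col_mem insert_corner_col_mem[OF _ n k] in blast)+

fun transpose_marked :: "((cells \<times> cells) \<times> cells) \<Rightarrow>
    ((cells \<times> cells) \<times> cells)" where
  "transpose_marked ((D,P),S) = ((transpose_cells D, transpose_cells P), transpose_cells S)"

lemma transpose_marked_involution: "transpose_marked (transpose_marked X) = X"
  by (cases X) auto

lemma card_corner_above:
  assumes n: "2 \<le> n"
  shows "card (corner_above n k) = card (corner_left n k)"
proof -
  let ?t = "\<lambda>(X, (i,j)). (transpose_marked X, (j,i))"
  have swap: "?t Z \<in> corner_left n k \<longleftrightarrow> Z \<in> corner_above n k" if "fst Z \<in> marked n k" "snd Z \<in> snd (fst Z)" for Z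
  proof -
    obtain D P S i0 j0 where Z: "Z = (((D,P),S),(i0,j0))" by (metis prod.exhaust)
    have T: "tree_like_tableau D P" and cP: "card P = n" and So: "S \<subseteq> occupied_corners D P"
      and c: "(i0,j0) \<in> S" using that by (auto simp: Z marked_iff)
    have cP': "(i0,j0) \<in> P" and cc: "is_corner D (i0,j0)" using c So unfolding occupied_corners_def by auto
    have "(i0,j0) \<noteq> (0,0)"
    proof
      assume "(i0,j0) = (0,0)"
      then show False using tlt_root_only_corner[OF T] cc cP n by simp
    qed
    then have "(\<exists>i'<i0. (i',j0) \<in> P) \<longleftrightarrow> \<not> (\<exists>j'<j0. (i0,j') \<in> P)" using tlt_left_xor_above[OF T cP'] by blast
    then show ?thesis
      using that marked_transpose_cells[of D P S n k] unfolding Z corner_left_def corner_above_def by auto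
  qed
  have "bij_betw ?t (corner_above n k) (corner_left n k)"
  proof (rule bij_betw_byWitness[where f'="?t"])
    show "\<forall>a\<in>corner_above n k. ?t (?t a) = a" "\<forall>a\<in>corner_left n k. ?t (?t a) = a"
      by (auto simp: transpose_marked_involution)
    show "?t ` corner_above n k \<subseteq> corner_left n k"
      using swap unfolding corner_above_def by fastforce
    show "?t ` corner_left n k \<subseteq> corner_above n k"
    proof
      fix W assume "W \<in> ?t ` corner_left n k"
      then obtain Z where "Z \<in> corner_left n k" "W = ?t Z" by blast
      moreover obtain D P S i j where "Z = (((D,P),S),(i,j))" by (metis prod.exhaust)
      ultimately have Z: "(((D,P),S),(i,j)) \<in> corner_left n k"
        and W: "W = (((transpose_cells D, transpose_cells P), transpose_cells S), (j,i))" by auto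
      have "fst W \<in> marked n k" "snd W \<in> snd (fst W)"
        using Z W marked_transpose_cells unfolding corner_left_def by auto
      moreover have "?t W \<in> corner_left n k" using Z W by simp
      ultimately show "W \<in> corner_above n k" using swap by blast
    qed
  qed
  then show ?thesis by (rule bij_betw_same_card)
qed

lemma card_free_col: "card (free_col n k) = card (free_row n k)"
proof -
  let ?t = "\<lambda>(X, e). (transpose_marked X, case_sum Inr Inl e)"
  have inv: "?t (?t Z) = Z" for Z
    by (cases Z) (auto simp: transpose_marked_involution split: sum.splits)
  have maps: "?t ` free_col n k \<subseteq> free_row n k" "?t ` free_row n k \<subseteq> free_col n k"
    unfolding free_col_def free_row_def
    by (auto dest: marked_transpose_cells simp: rows_of_transpose_cells cols_of_transpose_cells
        fst_transpose_cells snd_transpose_cells)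
  have "free_row n k \<subseteq> ?t ` free_col n k"
  proof
    fix Z assume "Z \<in> free_row n k"
    then have "?t Z \<in> free_col n k" by (rule subsetD[OF maps(2) imageI])
    then have "?t (?t Z) \<in> ?t ` free_col n k" by (rule imageI)
    then show "Z \<in> ?t ` free_col n k" by (simp only: inv)
  qed
  then have eq: "?t ` free_col n k = free_row n k" using maps(1) by (rule subset_antisym[rotated])
  have "inj_on ?t (free_col n k)" by (rule inj_on_inverseI[where g="?t"]) (rule inv)
  from card_image[OF this] show ?thesis unfolding eq by simp
qed

definition lines :: "cells \<Rightarrow> (nat + nat) set" where
  "lines D = Inl ` rows_of D \<union> Inr ` cols_of D"

definition lines_through :: "cells \<Rightarrow> (nat + nat) set" where
  "lines_through S = Inl ` fst ` S \<union> Inr ` snd ` S"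

lemma card_lines: "tree_like_tableau D P \<Longrightarrow> card (lines D) = card P + 1"
  unfolding lines_def using finite_rows_of finite_cols_of card_rows_of_add_card_cols_of
  by (subst card_Un_disjoint) (auto simp: card_image)

text \<open>Distinct corners lie in distinct rows and in distinct columns.\<close>

lemma card_lines_through:
  assumes F: "ferrers D" and S: "S \<subseteq> {c. is_corner D c}" and fin: "finite S"
  shows "card (lines_through S) = 2 * card S"
proof -
  have "inj_on fst S"
    using S corner_unique_in_row[OF F] by (intro inj_onI) (metis mem_Collect_eq prod.collapse subsetD)
  moreover have "inj_on snd S"
    using S corner_unique_in_col[OF F] by (intro inj_onI) (metis mem_Collect_eq prod.collapse subsetD)
  ultimately show ?thesis
    unfolding lines_through_def using fin by (subst card_Un_disjoint) (auto simp: card_image)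
qed

lemma card_free_lines:
  assumes "((D,P),S) \<in> marked m k"
  shows "card (lines D - lines_through S) = m + 1 - 2 * k"
proof -
  have T: "tree_like_tableau D P" and c: "card P = m" and So: "S \<subseteq> occupied_corners D P" and cS: "card S = k"
    using assms unfolding marked_iff by auto
  have F: "ferrers D" using tlt_ferrers[OF T] .
  have SD: "S \<subseteq> D" using So tlt_pointed_subset[OF T] unfolding occupied_corners_def by auto
  have "lines_through S \<subseteq> lines D"
  proof
    fix e assume "e \<in> lines_through S"
    then consider i j where "(i,j) \<in> S" "e = Inl i" | i j where "(i,j) \<in> S" "e = Inr j"
      unfolding lines_through_def by force
    then show "e \<in> lines D"
    proof cases
      case 1
      then have "(i,0) \<in> D" using SD ferrers_downward[OF F, of i j i 0] by auto
      then show ?thesis using 1 unfolding lines_def rows_of_def by auto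
    next
      case 2
      then have "(0,j) \<in> D" using SD ferrers_downward[OF F, of i j 0 j] by auto
      then show ?thesis using 2 unfolding lines_def cols_of_def by auto
    qed
  qed
  moreover have "card (lines_through S) = 2 * k"
    using card_lines_through[OF F] So finite_subset[OF So finite_occupied_corners[OF T]] cS
    unfolding occupied_corners_def by auto
  moreover have "finite (lines D)" unfolding lines_def using finite_rows_of[OF T] finite_cols_of[OF T] by simp
  ultimately show ?thesis using card_Diff_subset[OF finite_subset] card_lines[OF T] c by metis
qed

lemma card_marked_corners:
  assumes n: "2 \<le> n"
  shows "k * card (marked n k) = 2 * card (corner_left n k)"
proof -
  have "Sigma (marked n k) snd = corner_left n k \<union> corner_above n k"
    unfolding corner_left_def corner_above_def by auto
  moreover have "corner_left n k \<inter> corner_above n k = {}"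
    unfolding corner_left_def corner_above_def by auto
  moreover have "finite (Sigma (marked n k) snd)"
    by (rule finite_SigmaI[OF finite_marked finite_marked_set])
  moreover have "card (Sigma (marked n k) snd) = (\<Sum>X\<in>marked n k. card (snd X))"
    by (rule card_SigmaI[OF finite_marked ballI[OF finite_marked_set]])
  moreover have "\<dots> = (\<Sum>X\<in>marked n k. k)" by (rule sum.cong) (auto simp: marked_def)
  ultimately have "k * card (marked n k) = card (corner_left n k) + card (corner_above n k)"
    by (simp add: card_Un_disjoint)
  then show ?thesis using card_corner_above[OF n] by simp
qed

lemma card_marked_free_lines:
  "card (marked m k) * (m + 1 - 2 * k) = 2 * card (free_row m k)"
proof -
  let ?L = "\<lambda>X. lines (fst (fst X)) - lines_through (snd X)"
  have fin_lines: "finite (?L X)" if "X \<in> marked m k" for X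
    using that finite_rows_of finite_cols_of unfolding marked_def tableaux_def lines_def by auto
  have "Sigma (marked m k) ?L = free_row m k \<union> free_col m k"
    unfolding free_row_def free_col_def lines_def lines_through_def by force
  moreover have "free_row m k \<inter> free_col m k = {}"
    unfolding free_row_def free_col_def by auto
  moreover have "finite (Sigma (marked m k) ?L)"
    by (rule finite_SigmaI[OF finite_marked fin_lines])
  moreover have "card (Sigma (marked m k) ?L) = (\<Sum>X\<in>marked m k. card (?L X))"
    by (rule card_SigmaI[OF finite_marked ballI[OF fin_lines]])
  moreover have "\<dots> = (\<Sum>X\<in>marked m k. m + 1 - 2 * k)"
  proof (rule sum.cong[OF refl])
    fix X assume X: "X \<in> marked m k"
    obtain D P S where "X = ((D,P),S)" by (metis prod.exhaust)
    then show "card (?L X) = m + 1 - 2 * k" using card_free_lines X by simp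
  qed
  ultimately have "card (marked m k) * (m + 1 - 2 * k) = card (free_row m k) + card (free_col m k)"
    by (simp add: card_Un_disjoint)
  then show ?thesis using card_free_col by simp
qed

lemma card_marked_rec:
  assumes n: "2 \<le> n" and k: "1 \<le> k"
  shows "k * card (marked n k) = card (marked (n-1) (k-1)) * (n - 2 * (k - 1))"
  using card_marked_corners[OF n, of k] bij_betw_same_card[OF bij_betw_remove_corner_col[OF n k]]
    card_marked_free_lines[of "n - 1" "k - 1"] n by simp

section \<open>Closed form and inclusion-exclusion\<close>

lemma card_marked_1: "card (marked 1 k) = fact (1 - k) * ((1 - k + 1) choose k)"
proof -
  have "occupied_corners {(0,0)} {(0,0)} = {(0::nat,0::nat)}"
    unfolding occupied_corners_def is_corner_def by auto
  then have "marked 1 k = (\<lambda>S. (({(0,0)},{(0,0)}),S)) ` {S. S \<subseteq> {(0,0)} \<and> card S = k}"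
    unfolding marked_def tableaux_1 by auto
  then have "card (marked 1 k) = card {S. S \<subseteq> {(0::nat,0::nat)} \<and> card S = k}"
    by (simp add: card_image inj_on_def)
  also have "\<dots> = card {(0::nat,0::nat)} choose k" by (rule n_subsets) simp
  finally show ?thesis by (cases k) auto
qed

lemma closed_form_step:
  assumes n: "2 \<le> n" and k: "1 \<le> k"
  shows "k * (fact (n - k) * ((n - k + 1) choose k)) =
    fact ((n - 1) - (k - 1)) * (((n - 1) - (k - 1) + 1) choose (k - 1)) * (n - 2 * (k - 1))"
proof (cases "k \<le> n")
  case True
  define M where "M = n - k + 1"
  have "k * (M choose k) = M * ((M - 1) choose (k - 1))"
    using times_binomial_minus1_eq[of k M] k by simp
  also have "\<dots> = (M - (k - 1)) * (M choose (k - 1))"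
    by (rule binomial_absorb_comp[symmetric])
  also have "M - (k - 1) = n - 2 * (k - 1)" unfolding M_def using True k by arith
  finally have "k * (M choose k) = (n - 2 * (k - 1)) * (M choose (k - 1))" .
  moreover have "(n - 1) - (k - 1) = n - k" using True k by simp
  ultimately show ?thesis unfolding M_def by (simp add: ac_simps)
next
  case False
  then show ?thesis using n by (simp add: binomial_eq_0)
qed

lemma card_marked: "1 \<le> n \<Longrightarrow> card (marked n k) = fact (n - k) * ((n - k + 1) choose k)"
proof (induction n arbitrary: k rule: nat_induct_at_least)
  case base
  then show ?case using card_marked_1 by simp
next
  case (Suc m)
  show ?case
  proof (cases "k = 0")
    case True then show ?thesis using card_marked_0[of "Suc m"] by simp
  next
    case False
    then have k: "1 \<le> k" by simp
    have n: "2 \<le> Suc m" using Suc.hyps by simp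
    have "k * card (marked (Suc m) k) = card (marked m (k - 1)) * (Suc m - 2 * (k - 1))"
      using card_marked_rec[OF n k] by simp
    also have "\<dots> = k * (fact (Suc m - k) * ((Suc m - k + 1) choose k))"
      using Suc.IH[of "k - 1"] closed_form_step[OF n k] by simp
    finally show ?thesis using k by simp
  qed
qed

lemma sum_Pow_minus_one_power_card:
  assumes "finite A"
  shows "(\<Sum>S\<in>Pow A. (-1::int) ^ card S) = (if A = {} then 1 else 0)"
proof -
  have "(\<Prod>a\<in>A. (-1::int) + 1) = (\<Sum>X\<in>Pow A. (\<Prod>a\<in>X. -1) * (\<Prod>a\<in>A - X. 1))"
    by (rule prod_add) fact
  then have "(\<Sum>X\<in>Pow A. (-1::int) ^ card X) = 0 ^ card A" by simp
  then show ?thesis using assms by (simp add: card_gt_0_iff)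
qed

lemma card_no_occupied_corner_alternating:
  "int (card (tlt_no_occ_corner n)) = (\<Sum>k\<le>n. (-1) ^ k * int (card (marked n k)))"
proof -
  let ?A = "Sigma (tableaux n) (\<lambda>T. Pow (occupied_corners (fst T) (snd T)))"
  have fin: "finite (occupied_corners (fst T) (snd T))" if "T \<in> tableaux n" for T
    using that finite_occupied_corners unfolding tableaux_def by auto
  have "(\<Sum>X\<in>?A. (-1::int) ^ card (snd X)) = (\<Sum>k\<le>n. \<Sum>X\<in>{X\<in>?A. card (snd X) = k}. (-1) ^ card (snd X))"
  proof (rule sum.group[symmetric])
    show "finite {..n}" by simp
    show "finite ?A" using finite_tableaux fin by (intro finite_SigmaI) auto
    show "(\<lambda>X. card (snd X)) ` ?A \<subseteq> {..n}"
      using card_mono[OF tlt_finite_pointed] unfolding tableaux_def occupied_corners_def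
      by (fastforce simp: subset_iff)
  qed
  also have "\<dots> = (\<Sum>k\<le>n. (-1) ^ k * int (card (marked n k)))"
    unfolding marked_def by (intro sum.cong refl) (auto intro!: arg_cong[where f=card])
  finally have alt: "(\<Sum>X\<in>?A. (-1::int) ^ card (snd X)) = (\<Sum>k\<le>n. (-1) ^ k * int (card (marked n k)))" .
  have "(\<Sum>X\<in>?A. (-1::int) ^ card (snd X))
      = (\<Sum>T\<in>tableaux n. \<Sum>S\<in>Pow (occupied_corners (fst T) (snd T)). (-1) ^ card S)"
    by (subst sum.Sigma) (use finite_tableaux fin in \<open>auto simp: split_def\<close>)
  also have "\<dots> = (\<Sum>T\<in>tableaux n. if occupied_corners (fst T) (snd T) = {} then 1 else 0)"
    using fin by (intro sum.cong refl) (simp add: sum_Pow_minus_one_power_card)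
  also have "\<dots> = int (card (tableaux n \<inter> {T. occupied_corners (fst T) (snd T) = {}}))"
    using finite_tableaux[of n] by (simp add: sum.If_cases)
  also have "tableaux n \<inter> {T. occupied_corners (fst T) (snd T) = {}} = tlt_no_occ_corner n"
    unfolding tlt_no_occ_corner_def tableaux_def has_occupied_corner_def occupied_corners_def by auto
  finally show ?thesis using alt by simp
qed

text \<open>Substituting k \<mapsto> n - k; the terms with k < (n-1)/2 vanish since then n - k > k + 1.\<close>

lemma alternating_closed_form_reindex:
  fixes n :: nat
  shows "(\<Sum>k\<le>n. (-1) ^ k * int (fact (n - k) * ((n - k + 1) choose k))) =
    (\<Sum>k = nat \<lceil>(real n - 1) / 2\<rceil>..n. int ((k + 1) choose (n - k)) * (-1) ^ (n - k) * int (fact k))"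
proof -
  define m where "m = nat \<lceil>(real n - 1) / 2\<rceil>"
  define g where "g = (\<lambda>k. int ((k + 1) choose (n - k)) * (-1) ^ (n - k) * int (fact k))"
  have "(\<Sum>k\<le>n. (-1) ^ k * int (fact (n - k) * ((n - k + 1) choose k))) = (\<Sum>k\<le>n. g (n - k))"
    unfolding g_def by (intro sum.cong refl) (simp add: ac_simps)
  also have "\<dots> = (\<Sum>k\<le>n. g k)"
    using sum.atLeastAtMost_rev[of "\<lambda>k. g (n - k)" 0 n] by (simp add: atMost_atLeast0)
  also have "\<dots> = (\<Sum>k=m..n. g k)"
  proof -
    have vanish: "g k = 0" if "k < m" for k
    proof -
      have "real k < (real n - 1) / 2" using that unfolding m_def by linarith
      then have "real (2 * k + 1) < real n" by simp
      then have "k + 1 < n - k" by linarith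
      then show ?thesis unfolding g_def by (simp add: binomial_eq_0)
    qed
    have "\<lceil>(real n - 1) / 2\<rceil> \<le> int n" by (simp add: ceiling_le_iff)
    then have "m \<le> n" unfolding m_def by simp
    then have "{..n} = {0..<m} \<union> {m..n}" by auto
    then have "(\<Sum>k\<le>n. g k) = (\<Sum>k\<in>{0..<m}. g k) + (\<Sum>k=m..n. g k)"
      by (simp add: sum.union_disjoint ivl_disj_int)
    then show ?thesis using vanish by simp
  qed
  finally show ?thesis unfolding g_def m_def .
qed

theorem mainTheorem17:
  fixes n :: nat
  assumes "n \<ge> 1"
  shows "int (card (tlt_no_occ_corner n)) =
    (\<Sum>k = nat \<lceil>(real n - 1) / 2\<rceil>..n. int ((k + 1) choose (n - k)) * (-1) ^ (n - k) * int (fact k))"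
proof -
  have "int (card (tlt_no_occ_corner n)) = (\<Sum>k\<le>n. (-1) ^ k * int (card (marked n k)))"
    by (rule card_no_occupied_corner_alternating)
  also have "\<dots> = (\<Sum>k\<le>n. (-1) ^ k * int (fact (n - k) * ((n - k + 1) choose k)))"
    using card_marked[OF assms] by simp
  also have "\<dots> = (\<Sum>k = nat \<lceil>(real n - 1) / 2\<rceil>..n. int ((k + 1) choose (n - k)) * (-1) ^ (n - k) * int (fact k))"
    by (rule alternating_closed_form_reindex)
  finally show ?thesis .
qed

end
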